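(* For each integer $m\ge-1$, the function $\hat r_{-m}(x',\xi)$ can be written as a finite sum of expressions of the form $|\xi|^{-k}p(x',\xi)$, each of total weight $m+1$, and for each summand the total parity, normal parity and $\xi$-parity are well defined and their sum is $0$ modulo $2$. The same holds for $r_{-m}(x,\xi)=-\hat r_{-m}(x,0,\xi)$.
   Context: Let $(\Omega,g)$ be a compact Riemannian manifold of dimension $n$ with smooth boundary $M$. In boundary normal coordinates $x'=(x,x^n)$, $x=(x^1,\dots,x^{n-1})$ ($x^n$ = parameter along inward normal geodesics from $M$), $g=\sum_{\alpha,\beta=1}^{n-1}g_{\alpha\beta}(x')dx^\alpha dx^\beta+(dx^n)^2$; Greek indices run over $1,\dots,n-1$, $\xi=(\xi^1,\dots,\xi^{n-1})$ are dual variables, $D_{x^j}=-i\partial_{x^j}$, $\delta=\det(g_{\alpha\beta})$. Set $E=-\frac12\sum g^{\alpha\beta}\partial_{x^n}g_{\alpha\beta}$, $q_2=\sum g^{\alpha\beta}\xi^\alpha\xi^\beta$, $q_1=-i\sum_{\alpha,\beta}(\frac12g^{\alpha\beta}\partial_{x^\alpha}\log\delta+\partial_{x^\alpha}g^{\alpha\beta})\xi^\beta$, and $|\xi|=\sqrt{q_2}$. Define $\hat r_1=-\sqrt{q_2}$, $\hat r_0=\frac{1}{2\sqrt{q_2}}\big(\sum_\alpha\partial_{\xi^\alpha}\sqrt{q_2}\,D_{x^\alpha}\sqrt{q_2}-q_1-\partial_{x^n}\sqrt{q_2}+E\sqrt{q_2}\big)$, and for $m\ge0$, $\hat r_{-m-1}=\frac{1}{2\sqrt{q_2}}\Big(\sum_{-m\le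 j\le1,\,-m\le k\le1,\,|K|=j+k+m}\frac1{K!}\partial_\xi^K\hat r_j\,D_x^K\hat r_k+\partial_{x^n}\hat r_{-m}-E\hat r_{-m}\Big)$, with $K\in\mathbb N^{n-1}$ multi-indices. (Then $\mathcal D$, the Dirichlet-to-Neumann operator, has full symbol $r_1+r_0+r_{-1}+\dots$ modulo smoothing.) An expression of the form $|\xi|^{-k}p(x',\xi)$ means $k\in\mathbb Z$ and $p$ a polynomial in $\xi$ whose coefficients are polynomials (with constant complex coefficients) in $g_{\alpha\beta}$, $g^{\alpha\beta}$ and their partial derivatives in $x'$. Its total (resp. normal) weight is $w$ if every monomial in $p$ contains exactly $w$ derivatives (resp. $w$ derivatives in $x^n$); its total (resp. normal) parity is $1$ if every monomial has odd total (resp. normal) weight and $0$ if every monomial has even one; its $\xi$-parity is $0$ if $p$ is even in $\xi$ and $1$ if odd. *)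

theory Defs
  imports "HOL-Analysis.Analysis"
begin

text \<open>Local boundary normal coordinates x' = (x, x^n) with x in R^(n-1).
  The tangential index set is a finite linearly ordered type 'n (n - 1 = CARD('n));
  the normal coordinate is the second component of the pair.\<close>

type_synonym 'n pt = "(real^'n) \<times> real"
type_synonym 'n sym = "'n pt \<Rightarrow> real^'n \<Rightarrow> complex"
type_synonym 'n metric = "'n \<Rightarrow> 'n \<Rightarrow> 'n pt \<Rightarrow> real"

definition dvec :: "('n::finite) option \<Rightarrow> 'n pt" where
  "dvec d = (case d of Some \<alpha> \<Rightarrow> (axis \<alpha> 1, 0) | None \<Rightarrow> (0, 1))"

definition dd :: "('n::finite) option \<Rightarrow> ('n pt \<Rightarrow> 'b::real_normed_vector) \<Rightarrow> 'n pt \<Rightarrow> 'b" where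
  "dd d f p = vector_derivative (\<lambda>s. f (p + s *\<^sub>R dvec d)) (at 0)"

definition iterd :: "('n::finite) option list \<Rightarrow> ('n pt \<Rightarrow> 'b::real_normed_vector) \<Rightarrow> 'n pt \<Rightarrow> 'b" where
  "iterd ds f = fold dd ds f"

definition smooth_on_pt :: "('n::finite) pt set \<Rightarrow> ('n pt \<Rightarrow> real) \<Rightarrow> bool" where
  "smooth_on_pt U h \<longleftrightarrow> (\<forall>ds. \<forall>p\<in>U. iterd ds h differentiable (at p))"

text \<open>Tangential block g_{alpha beta} of a Riemannian metric in boundary normal coordinates
  g = sum g_{alpha beta} dx^alpha dx^beta + (dx^n)^2, on an open coordinate set U.\<close>
definition tang_metric :: "('n::finite) pt set \<Rightarrow> 'n metric \<Rightarrow> bool" where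
  "tang_metric U g \<longleftrightarrow> open U \<and> (\<forall>\<alpha> \<beta>. smooth_on_pt U (g \<alpha> \<beta>))
     \<and> (\<forall>\<alpha> \<beta>. \<forall>p\<in>U. g \<alpha> \<beta> p = g \<beta> \<alpha> p)
     \<and> (\<forall>p\<in>U. \<forall>v::real^'n. v \<noteq> 0 \<longrightarrow> (\<Sum>\<alpha>\<in>UNIV. \<Sum>\<beta>\<in>UNIV. g \<alpha> \<beta> p * v$\<alpha> * v$\<beta>) > 0)"

definition gmat :: "('n::finite) metric \<Rightarrow> 'n pt \<Rightarrow> real^'n^'n" where
  "gmat g p = (\<chi> \<alpha> \<beta>. g \<alpha> \<beta> p)"

definition ginv :: "('n::finite) metric \<Rightarrow> 'n metric" where
  "ginv g \<alpha> \<beta> p = matrix_inv (gmat g p) $ \<alpha> $ \<beta>"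

definition gdet :: "('n::finite) metric \<Rightarrow> 'n pt \<Rightarrow> real" where
  "gdet g p = det (gmat g p)"

definition pdx :: "('n::finite) \<Rightarrow> 'n sym \<Rightarrow> 'n sym" where
  "pdx \<alpha> f = (\<lambda>p \<xi>. dd (Some \<alpha>) (\<lambda>q. f q \<xi>) p)"

definition pdn :: "('n::finite) sym \<Rightarrow> 'n sym" where
  "pdn f = (\<lambda>p \<xi>. dd None (\<lambda>q. f q \<xi>) p)"

definition pdxi :: "('n::finite) \<Rightarrow> 'n sym \<Rightarrow> 'n sym" where
  "pdxi \<alpha> f = (\<lambda>p \<xi>. vector_derivative (\<lambda>s. f p (\<xi> + s *\<^sub>R axis \<alpha> 1)) (at 0))"

definition Dx :: "('n::finite) \<Rightarrow> 'n sym \<Rightarrow> 'n sym" where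
  "Dx \<alpha> f = (\<lambda>p \<xi>. - \<i> * pdx \<alpha> f p \<xi>)"

definition mi_list :: "('n::{finite,linorder} \<Rightarrow> nat) \<Rightarrow> 'n list" where
  "mi_list K = concat (map (\<lambda>\<alpha>. replicate (K \<alpha>) \<alpha>) (sorted_list_of_set (UNIV :: 'n set)))"

definition mi_abs :: "('n::finite \<Rightarrow> nat) \<Rightarrow> nat" where
  "mi_abs K = (\<Sum>\<alpha>\<in>UNIV. K \<alpha>)"

definition mi_fact :: "('n::finite \<Rightarrow> nat) \<Rightarrow> nat" where
  "mi_fact K = (\<Prod>\<alpha>\<in>UNIV. fact (K \<alpha>))"

definition pdxi_K :: "('n::{finite,linorder} \<Rightarrow> nat) \<Rightarrow> 'n sym \<Rightarrow> 'n sym" where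
  "pdxi_K K f = fold pdxi (mi_list K) f"

definition Dx_K :: "('n::{finite,linorder} \<Rightarrow> nat) \<Rightarrow> 'n sym \<Rightarrow> 'n sym" where
  "Dx_K K f = fold Dx (mi_list K) f"

definition q2 :: "('n::finite) metric \<Rightarrow> 'n pt \<Rightarrow> real^'n \<Rightarrow> real" where
  "q2 g p \<xi> = (\<Sum>\<alpha>\<in>UNIV. \<Sum>\<beta>\<in>UNIV. ginv g \<alpha> \<beta> p * \<xi>$\<alpha> * \<xi>$\<beta>)"

definition sq :: "('n::finite) metric \<Rightarrow> 'n sym" where
  "sq g = (\<lambda>p \<xi>. complex_of_real (sqrt (q2 g p \<xi>)))"

definition Efun :: "('n::finite) metric \<Rightarrow> 'n pt \<Rightarrow> real" where
  "Efun g p = - (1/2) * (\<Sum>\<alpha>\<in>UNIV. \<Sum>\<beta>\<in>UNIV. ginv g \<alpha> \<beta> p * dd None (g \<alpha> \<beta>) p)"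

definition q1 :: "('n::finite) metric \<Rightarrow> 'n sym" where
  "q1 g = (\<lambda>p \<xi>. - \<i> * (\<Sum>\<alpha>\<in>UNIV. \<Sum>\<beta>\<in>UNIV.
      complex_of_real (((1/2) * ginv g \<alpha> \<beta> p * dd (Some \<alpha>) (\<lambda>q. ln (gdet g q)) p
                        + dd (Some \<alpha>) (ginv g \<alpha> \<beta>) p) * \<xi>$\<beta>)))"

definition r1 :: "('n::finite) metric \<Rightarrow> 'n sym" where
  "r1 g = (\<lambda>p \<xi>. - sq g p \<xi>)"

definition r0 :: "('n::finite) metric \<Rightarrow> 'n sym" where
  "r0 g = (\<lambda>p \<xi>. (1 / (2 * sq g p \<xi>)) *
     ((\<Sum>\<alpha>\<in>UNIV. pdxi \<alpha> (sq g) p \<xi> * Dx \<alpha> (sq g) p \<xi>) - q1 g p \<xi>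
      - pdn (sq g) p \<xi> + complex_of_real (Efun g p) * sq g p \<xi>))"

text \<open>Recursion step: given L with L ! i = hat r_{1-i} for i <= m+1, compute hat r_{-m-1}.\<close>
definition rstep :: "('n::{finite,linorder}) metric \<Rightarrow> nat \<Rightarrow> 'n sym list \<Rightarrow> 'n sym" where
  "rstep g m L = (\<lambda>p \<xi>. (1 / (2 * sq g p \<xi>)) *
     ((\<Sum>j\<in>{- int m..1}. \<Sum>k\<in>{- int m..1}. \<Sum>K\<in>{K :: 'n \<Rightarrow> nat. int (mi_abs K) = j + k + int m}.
         (1 / of_nat (mi_fact K)) * pdxi_K K (L ! nat (1 - j)) p \<xi> * Dx_K K (L ! nat (1 - k)) p \<xi>)
      + pdn (L ! (m + 1)) p \<xi> - complex_of_real (Efun g p) * (L ! (m + 1)) p \<xi>))"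

fun rlist :: "('n::{finite,linorder}) metric \<Rightarrow> nat \<Rightarrow> 'n sym list" where
  "rlist g 0 = [r1 g]"
| "rlist g (Suc 0) = [r1 g, r0 g]"
| "rlist g (Suc (Suc m)) = rlist g (Suc m) @ [rstep g m (rlist g (Suc m))]"

definition rhat :: "('n::{finite,linorder}) metric \<Rightarrow> int \<Rightarrow> 'n sym" where
  "rhat g j = rlist g (nat (1 - j)) ! nat (1 - j)"

text \<open>An atom (u, alpha, beta, K, d) stands for
  d_x^K d_{x^n}^d g_{alpha beta} (u = False) or d_x^K d_{x^n}^d g^{alpha beta} (u = True).
  A monomial (c, atoms, e) stands for c * prod atoms * xi^e (c a complex constant).
  A term (k, P) stands for |xi|^{-k} * (sum of the monomials in P).\<close>
type_synonym 'n atm = "bool \<times> 'n \<times> 'n \<times> ('n \<Rightarrow> nat) \<times> nat"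
type_synonym 'n mnm = "complex \<times> 'n atm list \<times> ('n \<Rightarrow> nat)"
type_synonym 'n trm = "int \<times> 'n mnm list"

fun atm_val :: "('n::{finite,linorder}) metric \<Rightarrow> 'n atm \<Rightarrow> 'n pt \<Rightarrow> real" where
  "atm_val g (u, \<alpha>, \<beta>, K, d) p =
     iterd (map Some (mi_list K) @ replicate d None) (if u then ginv g \<alpha> \<beta> else g \<alpha> \<beta>) p"

fun mnm_val :: "('n::{finite,linorder}) metric \<Rightarrow> 'n mnm \<Rightarrow> 'n sym" where
  "mnm_val g (c, as, e) p \<xi> =
     c * complex_of_real ((\<Prod>a\<leftarrow>as. atm_val g a p) * (\<Prod>\<alpha>\<in>UNIV. (\<xi>$\<alpha>) ^ (e \<alpha>)))"

fun trm_val :: "('n::{finite,linorder}) metric \<Rightarrow> 'n trm \<Rightarrow> 'n sym" where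
  "trm_val g (k, P) p \<xi> =
     complex_of_real (sqrt (q2 g p \<xi>) powi (- k)) * (\<Sum>M\<leftarrow>P. mnm_val g M p \<xi>)"

definition rep_val :: "('n::{finite,linorder}) metric \<Rightarrow> 'n trm list \<Rightarrow> 'n sym" where
  "rep_val g R p \<xi> = (\<Sum>t\<leftarrow>R. trm_val g t p \<xi>)"

fun atm_w :: "('n::finite) atm \<Rightarrow> nat" where
  "atm_w (u, \<alpha>, \<beta>, K, d) = mi_abs K + d"

fun atm_nw :: "'n atm \<Rightarrow> nat" where
  "atm_nw (u, \<alpha>, \<beta>, K, d) = d"

fun mnm_w :: "('n::finite) mnm \<Rightarrow> nat" where
  "mnm_w (c, as, e) = sum_list (map atm_w as)"

fun mnm_nw :: "'n mnm \<Rightarrow> nat" where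
  "mnm_nw (c, as, e) = sum_list (map atm_nw as)"

fun mnm_deg :: "('n::finite) mnm \<Rightarrow> nat" where
  "mnm_deg (c, as, e) = mi_abs e"

fun graded_trm :: "int \<Rightarrow> ('n::finite) trm \<Rightarrow> bool" where
  "graded_trm w (k, P) \<longleftrightarrow>
     (\<forall>M\<in>set P. int (mnm_w M) = w) \<and>
     (\<exists>tp np xp :: nat. (\<forall>M\<in>set P. mnm_w M mod 2 = tp \<and> mnm_nw M mod 2 = np \<and> mnm_deg M mod 2 = xp)
                        \<and> even (tp + np + xp))"

end

theory Submission
  imports Defs
begin

text \<open>
  Every symbol produced by the recursion is represented as a formal sum of terms
  \<open>|\<xi>|\<^sup>-\<^sup>k c \<Prod>\<partial>\<^sup>K g \<xi>\<^sup>e\<close>, the factors being derivatives of \<open>g\<^sub>\<alpha>\<^sub>\<beta>\<close> or \<open>g\<^sup>\<alpha>\<^sup>\<beta>\<close>.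
  Products, \<open>\<partial>\<^sub>\<xi>\<close>, \<open>D\<^sub>x\<close> and \<open>\<partial>\<^sub>x\<^sub>n\<close> act on such sums by formal rules: the Leibniz rule,
  \<open>\<partial>g\<^sup>-\<^sup>1 = -g\<^sup>-\<^sup>1 (\<partial>g) g\<^sup>-\<^sup>1\<close> and \<open>\<partial>|\<xi>|\<^sup>-\<^sup>k = -k/2 |\<xi>|\<^sup>-\<^sup>k\<^sup>-\<^sup>2 \<partial>q\<^sub>2\<close>.
  An \<open>x\<close>-derivative raises the total weight by one (and, if normal, the normal weight),
  a \<open>\<xi>\<close>-derivative changes the \<open>\<xi>\<close>-degree by one; so the sum of the three parities of a
  term flips exactly with each \<open>\<xi>\<close>-derivative and each tangential \<open>x\<close>-derivative.
  In the recursion these come in pairs \<open>\<partial>\<^sub>\<xi>\<^sup>K\<close>, \<open>D\<^sub>x\<^sup>K\<close>, so by induction every term of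
  \<open>r\<^sub>-\<^sub>m\<close> has weight \<open>m + 1\<close> and even parity sum.
\<close>

section \<open>Partial derivatives\<close>

lemma has_vector_derivative_along_line:
  assumes "(f has_derivative f') (at (q + s *\<^sub>R v))"
  shows "((\<lambda>s. f (q + s *\<^sub>R v)) has_vector_derivative f' v) (at s)"
proof -
  have "((\<lambda>s. q + s *\<^sub>R v) has_derivative (\<lambda>s. s *\<^sub>R v)) (at s)"
    by (auto intro!: derivative_eq_intros)
  from has_derivative_compose[OF this assms] show ?thesis
    using has_derivative_linear[OF assms] by (simp add: has_vector_derivative_def linear_cmul)
qed

lemma dd_eq_derivative:
  assumes "(f has_derivative f') (at p)"
  shows "dd d f p = f' (dvec d)"
  unfolding dd_def
  by (rule vector_derivative_at) (use has_vector_derivative_along_line[of f f' p 0] assms in simp)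

lemma has_vector_derivative_dd:
  assumes "f differentiable (at (q + s *\<^sub>R dvec d))"
  shows "((\<lambda>s. f (q + s *\<^sub>R dvec d)) has_vector_derivative dd d f (q + s *\<^sub>R dvec d)) (at s)"
proof -
  obtain f' where "(f has_derivative f') (at (q + s *\<^sub>R dvec d))"
    using assms differentiable_def by blast
  then show ?thesis using has_vector_derivative_along_line dd_eq_derivative by metis
qed

lemma has_real_derivative_dd:
  fixes f :: "'n::finite pt \<Rightarrow> real"
  assumes "f differentiable (at (q + s *\<^sub>R dvec d))"
  shows "((\<lambda>s. f (q + s *\<^sub>R dvec d)) has_real_derivative dd d f (q + s *\<^sub>R dvec d)) (at s)"
  using has_vector_derivative_dd[OF assms] by (simp add: has_real_derivative_iff_has_vector_derivative)

lemma has_real_derivative_dd_0: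
  fixes f :: "'n::finite pt \<Rightarrow> real"
  assumes "f differentiable (at p)"
  shows "((\<lambda>s. f (p + s *\<^sub>R dvec d)) has_real_derivative dd d f p) (at 0)"
  using has_real_derivative_dd[of f p 0 d] assms by simp

lemma norm_dvec_le: "norm (dvec d :: 'n::finite pt) \<le> 1"
  by (cases d) (auto simp: dvec_def intro: order.trans[OF norm_Pair_le])

lemma eventually_line_in_open:
  fixes p v :: "'a::real_normed_vector"
  assumes "open S" "p \<in> S"
  shows "eventually (\<lambda>s. p + s *\<^sub>R v \<in> S) (nhds (0::real))"
proof -
  have "((\<lambda>s::real. p + s *\<^sub>R v) \<longlongrightarrow> p + 0 *\<^sub>R v) (nhds 0)"
    by (intro tendsto_intros filterlim_ident)
  then show ?thesis using topological_tendstoD assms by fastforce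
qed

lemma dd_cong_open:
  assumes "open S" "p \<in> S" "\<And>q. q \<in> S \<Longrightarrow> f q = h q"
  shows "dd d f p = dd d h p"
  unfolding dd_def
proof (rule vector_derivative_cong_eq)
  show "\<forall>\<^sub>F s in nhds 0. s \<in> UNIV \<longrightarrow> f (p + s *\<^sub>R dvec d) = h (p + s *\<^sub>R dvec d)"
    using eventually_line_in_open[OF assms(1,2), of "dvec d"] by eventually_elim (simp add: assms(3))
qed auto

lemma iterd_Nil [simp]: "iterd [] h = h"
  by (simp add: iterd_def)

lemma iterd_Cons [simp]: "iterd (d # ds) h = iterd ds (dd d h)"
  by (simp add: iterd_def)

lemma iterd_append: "iterd (ds @ ds') h = iterd ds' (iterd ds h)"
  by (simp add: iterd_def)

lemma iterd_cong_open:
  assumes "open S" "\<And>q. q \<in> S \<Longrightarrow> f q = h q" "q \<in> S"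
  shows "iterd ds f q = iterd ds h q"
  using assms(2,3)
proof (induction ds arbitrary: f h q)
  case (Cons d ds)
  have "dd d f q = dd d h q" if "q \<in> S" for q
    using dd_cong_open[OF assms(1) that] Cons.prems(1) by blast
  then show ?case using Cons.IH[of "dd d f" "dd d h"] Cons.prems(2) by simp
qed simp

lemma smooth_on_pt_iterd: "smooth_on_pt U h \<Longrightarrow> smooth_on_pt U (iterd ds h)"
  unfolding smooth_on_pt_def by (metis iterd_append)

lemma smooth_on_pt_dd: "smooth_on_pt U h \<Longrightarrow> smooth_on_pt U (dd d h)"
  using smooth_on_pt_iterd[of U h "[d]"] by simp

lemma smooth_on_pt_differentiable: "smooth_on_pt U h \<Longrightarrow> p \<in> U \<Longrightarrow> h differentiable (at p)"
  unfolding smooth_on_pt_def by (metis iterd_Nil)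

lemma dd_const [simp]: "dd d (\<lambda>q. c) = (\<lambda>q. 0)"
  by (simp add: dd_def fun_eq_iff)

lemma smooth_on_pt_const: "smooth_on_pt U (\<lambda>q::'n::finite pt. c :: real)"
proof -
  have "iterd ds (\<lambda>q::'n pt. c) = (\<lambda>q. if ds = [] then c else 0)" for ds
    by (induction ds arbitrary: c) auto
  then show ?thesis by (simp add: smooth_on_pt_def)
qed

lemma smooth_on_pt_coinduct:
  assumes U: "open U"
    and diff: "\<And>h p. h \<in> A \<Longrightarrow> p \<in> U \<Longrightarrow> h differentiable (at p)"
    and closed: "\<And>h d. h \<in> A \<Longrightarrow> \<exists>h'\<in>A. \<forall>p\<in>U. dd d h p = h' p"
    and h: "h \<in> A"
  shows "smooth_on_pt U h"
proof -
  have iterd_in: "\<exists>h'\<in>A. \<forall>p\<in>U. iterd ds h p = h' p" if "h \<in> A" for h ds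
    using that
  proof (induction ds arbitrary: h)
    case (Cons d ds)
    obtain h1 where h1: "h1 \<in> A" "\<forall>p\<in>U. dd d h p = h1 p" using closed Cons.prems by blast
    obtain h2 where h2: "h2 \<in> A" "\<forall>p\<in>U. iterd ds h1 p = h2 p" using Cons.IH[OF h1(1)] by blast
    have "\<forall>p\<in>U. iterd ds (dd d h) p = iterd ds h1 p"
      using iterd_cong_open[OF U] h1(2) by blast
    then show ?case using h2 by auto
  qed auto
  show ?thesis unfolding smooth_on_pt_def
  proof (intro allI ballI)
    fix ds p assume p: "p \<in> U"
    obtain h' where h': "h' \<in> A" "\<forall>p\<in>U. iterd ds h p = h' p" using iterd_in[OF h] by blast
    obtain f' where "(h' has_derivative f') (at p)"
      using diff[OF h'(1) p] differentiable_def by blast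
    then have "(iterd ds h has_derivative f') (at p)"
      by (rule has_derivative_transform_within_open[OF _ U p]) (use h' in auto)
    then show "iterd ds h differentiable (at p)" unfolding differentiable_def by blast
  qed
qed

lemma dist_square_dvec_le:
  fixes p :: "'n::finite pt"
  assumes "0 \<le> s" "s \<le> t" "0 \<le> \<tau>" "\<tau> \<le> t"
  shows "dist (p + s *\<^sub>R dvec c + \<tau> *\<^sub>R dvec c') p \<le> 2 * t"
proof -
  have "norm (s *\<^sub>R dvec c + \<tau> *\<^sub>R dvec c' :: 'n pt) \<le> s * 1 + \<tau> * 1"
    using norm_triangle_ineq[of "s *\<^sub>R dvec c" "\<tau> *\<^sub>R dvec c'"] assms
      mult_left_mono[OF norm_dvec_le[of c], of s] mult_left_mono[OF norm_dvec_le[of c'], of \<tau>]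
    by simp
  then show ?thesis using assms by (simp add: dist_norm)
qed

lemma second_difference_mean_value:
  fixes h :: "'n::finite pt \<Rightarrow> real"
  assumes sm: "smooth_on_pt U h" and t: "0 < t"
    and inU: "\<And>s \<tau>. 0 \<le> s \<Longrightarrow> s \<le> t \<Longrightarrow> 0 \<le> \<tau> \<Longrightarrow> \<tau> \<le> t \<Longrightarrow> p + s *\<^sub>R dvec a + \<tau> *\<^sub>R dvec b \<in> U"
  shows "\<exists>\<sigma> \<tau>. 0 < \<sigma> \<and> \<sigma> < t \<and> 0 < \<tau> \<and> \<tau> < t \<and>
     h (p + t *\<^sub>R dvec a + t *\<^sub>R dvec b) - h (p + t *\<^sub>R dvec a) - h (p + t *\<^sub>R dvec b) + h p
       = t * t * dd b (dd a h) (p + \<sigma> *\<^sub>R dvec a + \<tau> *\<^sub>R dvec b)"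
proof -
  define x where "x s \<tau> = p + s *\<^sub>R dvec a + \<tau> *\<^sub>R dvec b" for s \<tau>
  have x_a: "x s c = (p + c *\<^sub>R dvec b) + s *\<^sub>R dvec a" for s c
    by (simp add: x_def algebra_simps)
  have diff: "f differentiable (at (x s \<tau>))"
    if "smooth_on_pt U f" "0 \<le> s" "s \<le> t" "0 \<le> \<tau>" "\<tau> \<le> t" for f s \<tau>
    using smooth_on_pt_differentiable that inU unfolding x_def by blast
  have "\<exists>\<sigma>. 0 < \<sigma> \<and> \<sigma> < t \<and> (h (x t t) - h (x t 0)) - (h (x 0 t) - h (x 0 0))
      = (t - 0) * (dd a h (x \<sigma> t) - dd a h (x \<sigma> 0))"
  proof (rule MVT2[OF t, where f = "\<lambda>s. h (x s t) - h (x s 0)"])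
    fix s assume "0 \<le> s" "s \<le> t"
    then show "((\<lambda>s. h (x s t) - h (x s 0)) has_real_derivative dd a h (x s t) - dd a h (x s 0)) (at s)"
      unfolding x_a using t by (intro DERIV_diff has_real_derivative_dd diff[OF sm, unfolded x_a]) auto
  qed
  then obtain \<sigma> where \<sigma>: "0 < \<sigma>" "\<sigma> < t"
    and \<Delta>: "(h (x t t) - h (x t 0)) - (h (x 0 t) - h (x 0 0)) = t * (dd a h (x \<sigma> t) - dd a h (x \<sigma> 0))"
    by auto
  have "\<exists>\<tau>. 0 < \<tau> \<and> \<tau> < t \<and> dd a h (x \<sigma> t) - dd a h (x \<sigma> 0) = (t - 0) * dd b (dd a h) (x \<sigma> \<tau>)"
  proof (rule MVT2[OF t, where f = "\<lambda>\<tau>. dd a h (x \<sigma> \<tau>)"])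
    fix \<tau> assume "0 \<le> \<tau>" "\<tau> \<le> t"
    then show "((\<lambda>\<tau>. dd a h (x \<sigma> \<tau>)) has_real_derivative dd b (dd a h) (x \<sigma> \<tau>)) (at \<tau>)"
      unfolding x_def using \<sigma>
      by (intro has_real_derivative_dd diff[OF smooth_on_pt_dd[OF sm], unfolded x_def]) auto
  qed
  then obtain \<tau> where "0 < \<tau>" "\<tau> < t" "dd a h (x \<sigma> t) - dd a h (x \<sigma> 0) = t * dd b (dd a h) (x \<sigma> \<tau>)"
    by auto
  with \<sigma> \<Delta> show ?thesis unfolding x_def by (intro exI[of _ \<sigma>] exI[of _ \<tau>]) (auto simp: algebra_simps)
qed

text \<open>Schwarz's theorem: both orders of differentiation compute the same second
  difference, so the two mixed partials agree in the limit by continuity.\<close>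

lemma dd_commute:
  fixes h :: "'n::finite pt \<Rightarrow> real"
  assumes U: "open U" and sm: "smooth_on_pt U h" and p: "p \<in> U"
  shows "dd b (dd a h) p = dd a (dd b h) p"
proof (rule ccontr)
  define D1 where "D1 = dd b (dd a h)"
  define D2 where "D2 = dd a (dd b h)"
  assume "dd b (dd a h) p \<noteq> dd a (dd b h) p"
  then have e: "0 < \<bar>D1 p - D2 p\<bar> / 2" by (simp add: D1_def D2_def)
  have "isCont D1 p" "isCont D2 p"
    unfolding D1_def D2_def using smooth_on_pt_differentiable[OF _ p] differentiable_imp_continuous_within
    by (metis smooth_on_pt_dd sm)+
  with e obtain \<delta>1 \<delta>2 where
      \<delta>1: "\<delta>1 > 0" "\<And>x. dist x p < \<delta>1 \<Longrightarrow> dist (D1 x) (D1 p) < \<bar>D1 p - D2 p\<bar> / 2" and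
      \<delta>2: "\<delta>2 > 0" "\<And>x. dist x p < \<delta>2 \<Longrightarrow> dist (D2 x) (D2 p) < \<bar>D1 p - D2 p\<bar> / 2"
    unfolding continuous_at_eps_delta by metis
  obtain r where r: "r > 0" "ball p r \<subseteq> U" using U p open_contains_ball by blast
  define t where "t = min r (min \<delta>1 \<delta>2) / 3"
  have t: "0 < t" "2 * t < r" "2 * t < \<delta>1" "2 * t < \<delta>2" using r \<delta>1 \<delta>2 by (auto simp: t_def)
  have inU: "p + s *\<^sub>R dvec c + \<tau> *\<^sub>R dvec c' \<in> U"
    if "0 \<le> s" "s \<le> t" "0 \<le> \<tau>" "\<tau> \<le> t" for s \<tau> c c'
    using dist_square_dvec_le[OF that, where p = p and c = c and c' = c'] t r by (auto simp: dist_commute)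
  obtain \<sigma> \<tau> where \<sigma>\<tau>: "0 < \<sigma>" "\<sigma> < t" "0 < \<tau>" "\<tau> < t" and
      eq1: "h (p + t *\<^sub>R dvec a + t *\<^sub>R dvec b) - h (p + t *\<^sub>R dvec a) - h (p + t *\<^sub>R dvec b) + h p
        = t * t * D1 (p + \<sigma> *\<^sub>R dvec a + \<tau> *\<^sub>R dvec b)"
    using second_difference_mean_value[OF sm t(1) inU] unfolding D1_def by blast
  obtain \<sigma>' \<tau>' where \<sigma>\<tau>': "0 < \<sigma>'" "\<sigma>' < t" "0 < \<tau>'" "\<tau>' < t" and
      eq2: "h (p + t *\<^sub>R dvec b + t *\<^sub>R dvec a) - h (p + t *\<^sub>R dvec b) - h (p + t *\<^sub>R dvec a) + h p
        = t * t * D2 (p + \<sigma>' *\<^sub>R dvec b + \<tau>' *\<^sub>R dvec a)"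
    using second_difference_mean_value[OF sm t(1) inU] unfolding D2_def by blast
  have "D1 (p + \<sigma> *\<^sub>R dvec a + \<tau> *\<^sub>R dvec b) = D2 (p + \<sigma>' *\<^sub>R dvec b + \<tau>' *\<^sub>R dvec a)"
    using eq1 eq2 t(1) by (simp add: algebra_simps)
  moreover have "dist (D1 (p + \<sigma> *\<^sub>R dvec a + \<tau> *\<^sub>R dvec b)) (D1 p) < \<bar>D1 p - D2 p\<bar> / 2"
    using dist_square_dvec_le[where s = \<sigma> and t = t and \<tau> = \<tau> and p = p and c = a and c' = b] \<sigma>\<tau> t
    by (intro \<delta>1(2)) simp
  moreover have "dist (D2 (p + \<sigma>' *\<^sub>R dvec b + \<tau>' *\<^sub>R dvec a)) (D2 p) < \<bar>D1 p - D2 p\<bar> / 2"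
    using dist_square_dvec_le[where s = \<sigma>' and t = t and \<tau> = \<tau>' and p = p and c = b and c' = a] \<sigma>\<tau>' t
    by (intro \<delta>2(2)) simp
  ultimately show False unfolding dist_real_def by argo
qed

lemma iterd_mset_eq:
  assumes U: "open U" and sm: "smooth_on_pt U h" and q: "q \<in> U" and eq: "mset ds = mset ds'"
  shows "iterd ds h q = iterd ds' h q"
  using sm eq
proof (induction ds arbitrary: ds' h)
  case (Cons a ds)
  have move_front: "iterd (xs @ a # ys) f q = iterd (a # xs @ ys) f q" if "smooth_on_pt U f" for xs ys f
    using that
  proof (induction xs arbitrary: f)
    case (Cons x xs)
    have "iterd (a # xs @ ys) (dd x f) q = iterd (x # xs @ ys) (dd a f) q"
      using iterd_cong_open[OF U _ q, of "dd a (dd x f)" "dd x (dd a f)"]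
        dd_commute[OF U Cons.prems] by simp
    then show ?case using Cons.IH[OF smooth_on_pt_dd[OF Cons.prems]] by simp
  qed simp
  obtain xs ys where ds': "ds' = xs @ a # ys"
    using Cons.prems(2) by (metis list.set_intros(1) set_mset_mset split_list)
  then have "mset ds = mset (xs @ ys)" using Cons.prems(2) by simp
  then show ?case
    using Cons.IH[OF smooth_on_pt_dd[OF Cons.prems(1)]] move_front[OF Cons.prems(1)] ds' by simp
qed simp

lemma dd_add:
  fixes f h :: "'n::finite pt \<Rightarrow> 'b::real_normed_vector"
  assumes "f differentiable (at p)" "h differentiable (at p)"
  shows "dd d (\<lambda>q. f q + h q) p = dd d f p + dd d h p"
proof -
  obtain f' h' where f': "(f has_derivative f') (at p)" and h': "(h has_derivative h') (at p)"
    using assms differentiable_def by blast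
  from dd_eq_derivative[OF has_derivative_add[OF f' h']] show ?thesis
    by (simp add: dd_eq_derivative[OF f'] dd_eq_derivative[OF h'])
qed

lemma dd_mult:
  fixes f h :: "'n::finite pt \<Rightarrow> 'b::real_normed_algebra"
  assumes "f differentiable (at p)" "h differentiable (at p)"
  shows "dd d (\<lambda>q. f q * h q) p = f p * dd d h p + dd d f p * h p"
proof -
  obtain f' h' where f': "(f has_derivative f') (at p)" and h': "(h has_derivative h') (at p)"
    using assms differentiable_def by blast
  from dd_eq_derivative[OF has_derivative_mult[OF f' h']] show ?thesis
    by (simp add: dd_eq_derivative[OF f'] dd_eq_derivative[OF h'])
qed

lemma dd_sum:
  fixes f :: "'i \<Rightarrow> 'n::finite pt \<Rightarrow> 'b::real_normed_vector"
  assumes "finite S" "\<And>i. i \<in> S \<Longrightarrow> f i differentiable (at p)"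
  shows "dd d (\<lambda>q. \<Sum>i\<in>S. f i q) p = (\<Sum>i\<in>S. dd d (f i) p)"
  using assms by (induction S rule: finite_induct) (simp_all add: dd_add)

lemma differentiable_prod:
  fixes f :: "'i \<Rightarrow> 'a::real_normed_vector \<Rightarrow> 'b::{real_normed_algebra,comm_ring_1}"
  assumes "finite S" "\<And>i. i \<in> S \<Longrightarrow> f i differentiable (at p)"
  shows "(\<lambda>q. \<Prod>i\<in>S. f i q) differentiable (at p)"
  using assms by (induction S rule: finite_induct) simp_all

lemma dd_prod:
  fixes f :: "'i \<Rightarrow> 'n::finite pt \<Rightarrow> real"
  assumes "finite S" "\<And>i. i \<in> S \<Longrightarrow> f i differentiable (at p)"
  shows "dd d (\<lambda>q. \<Prod>i\<in>S. f i q) p = (\<Sum>i\<in>S. dd d (f i) p * (\<Prod>j\<in>S - {i}. f j p))"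
  using assms
proof (induction S rule: finite_induct)
  case (insert x F)
  have "dd d (\<lambda>q. \<Prod>i\<in>insert x F. f i q) p
      = f x p * dd d (\<lambda>q. \<Prod>i\<in>F. f i q) p + dd d (f x) p * (\<Prod>i\<in>F. f i p)"
    using insert by (simp add: dd_mult differentiable_prod)
  also have "\<dots> = (\<Sum>i\<in>insert x F. dd d (f i) p * (\<Prod>j\<in>insert x F - {i}. f j p))"
    using insert
    by (auto simp: sum_distrib_left insert_Diff_if mult_ac intro!: sum.cong prod.cong)
  finally show ?case .
qed simp

section \<open>Positive definite matrices and determinants\<close>

definition quad_form :: "real^'m^'m \<Rightarrow> real^'m \<Rightarrow> real" where
  "quad_form A v = (\<Sum>a\<in>UNIV. \<Sum>b\<in>UNIV. A $ a $ b * v $ a * v $ b)"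

definition posdef :: "real^'m^'m \<Rightarrow> bool" where
  "posdef A \<longleftrightarrow> (\<forall>v. v \<noteq> 0 \<longrightarrow> 0 < quad_form A v)"

lemma quad_form_eq_inner: "quad_form A v = v \<bullet> (A *v v)"
  by (simp add: quad_form_def inner_vec_def matrix_vector_mult_def sum_distrib_left mult_ac)

lemma posdef_invertible:
  assumes "posdef A"
  shows "invertible A"
proof -
  have "\<forall>x. A *v x = 0 \<longrightarrow> x = 0"
    using assms by (auto simp: posdef_def quad_form_eq_inner)
  then obtain B where "B ** A = mat 1" using matrix_left_invertible_ker by blast
  then show ?thesis unfolding invertible_def using matrix_left_right_inverse by blast
qed

text \<open>The segment from \<open>A\<close> to the identity stays positive definite, hence invertible,
  so \<open>det\<close> does not vanish on it; by the intermediate value theorem it keeps the sign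
  of \<open>det (mat 1) = 1\<close>.\<close>

lemma posdef_det_pos:
  fixes A :: "real^'m::finite^'m"
  assumes A: "posdef A"
  shows "det A > 0"
proof (rule ccontr)
  define M where "M t = (1 - t) *\<^sub>R A + t *\<^sub>R mat 1" for t :: real
  assume "\<not> det A > 0"
  then have "det (M 0) \<le> 0" "det (M 1) = 1" by (simp_all add: M_def)
  moreover have "isCont (\<lambda>t. det (M t)) t" for t
    unfolding M_def det_def by (intro continuous_intros)
  ultimately obtain t where t: "0 \<le> t" "t \<le> 1" "det (M t) = 0"
    using IVT[of "\<lambda>t. det (M t)" 0 0 1] by auto
  have "posdef (M t)"
    unfolding posdef_def
  proof (intro allI impI)
    fix v :: "real^'m" assume "v \<noteq> 0"
    then have "0 < v \<bullet> v" "0 < quad_form A v" using A by (auto simp: posdef_def)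
    moreover have "quad_form (M t) v = (1 - t) * quad_form A v + t * (v \<bullet> v)"
      by (simp add: quad_form_eq_inner M_def matrix_vector_mult_add_rdistrib
          scaleR_matrix_vector_assoc[symmetric] inner_add_right)
    ultimately show "0 < quad_form (M t) v"
      using t(1,2) by (cases "t = 1") (auto intro!: add_pos_nonneg)
  qed
  then have "invertible (M t)" by (rule posdef_invertible)
  then show False using t(3) by (simp add: invertible_det_nz)
qed

lemma matrix_inv_right: "invertible A \<Longrightarrow> A ** matrix_inv A = mat 1"
  and matrix_inv_left: "invertible A \<Longrightarrow> matrix_inv A ** A = mat 1"
  unfolding invertible_def matrix_inv_def by (metis (mono_tags, lifting) someI_ex)+

lemma det_row_replace:
  fixes A :: "real^'m::finite^'m"
  assumes "invertible A"
  shows "det (\<chi> j. if j = i then r else A $ j) = (r v* matrix_inv A) $ i * det A"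
proof -
  define x where "x = r v* matrix_inv A"
  have "x v* A = r"
    using matrix_inv_left[OF assms] by (simp add: x_def vector_matrix_mul_assoc)
  then have rows: "(\<Sum>k\<in>UNIV. x $ k *s A $ k) = r"
    by (simp add: vec_eq_iff vector_matrix_mult_def mult.commute)
  have "row j A = A $ j" for j by (simp add: row_def vec_eq_iff)
  then have "det (\<chi> j. if j = i then r else A $ j) = x $ i * det A"
    using cramer_lemma_transpose[of i x A] by (simp only: rows)
  then show ?thesis by (simp add: x_def)
qed

lemma det_differentiable:
  fixes M :: "'a::real_normed_vector \<Rightarrow> real^'m::finite^'m"
  assumes "\<And>i j. (\<lambda>q. M q $ i $ j) differentiable (at p)"
  shows "(\<lambda>q. det (M q)) differentiable (at p)"
proof -
  have "(\<lambda>q. \<Prod>i\<in>UNIV. M q $ i $ \<pi> i) differentiable (at p)" for \<pi>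
    by (rule differentiable_prod) (auto intro: assms)
  then show ?thesis unfolding det_def by (auto intro!: differentiable_sum differentiable_mult)
qed

lemma dd_det:
  fixes M :: "'n::finite pt \<Rightarrow> real^'m::finite^'m"
  assumes "\<And>i j. (\<lambda>q. M q $ i $ j) differentiable (at p)"
  shows "dd d (\<lambda>q. det (M q)) p =
     (\<Sum>i\<in>UNIV. det (\<chi> j. if j = i then (\<chi> k. dd d (\<lambda>q. M q $ i $ k) p) else M p $ j))"
proof -
  let ?P = "{\<pi>. \<pi> permutes (UNIV :: 'm set)}"
  have prod_diff: "(\<lambda>q. \<Prod>i\<in>UNIV. M q $ i $ \<pi> i) differentiable (at p)" for \<pi>
    by (rule differentiable_prod) (auto intro: assms)
  have row_prod: "(\<Prod>j\<in>UNIV. (\<chi> j. if j = i then (\<chi> k. dd d (\<lambda>q. M q $ i $ k) p) else M p $ j) $ j $ \<pi> j)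
      = dd d (\<lambda>q. M q $ i $ \<pi> i) p * (\<Prod>j\<in>UNIV - {i}. M p $ j $ \<pi> j)" for i \<pi>
    by (subst prod.remove[of UNIV i]) (auto intro!: prod.cong)
  have "dd d (\<lambda>q. det (M q)) p =
     (\<Sum>\<pi>\<in>?P. of_int (sign \<pi>) * (\<Sum>i\<in>UNIV. dd d (\<lambda>q. M q $ i $ \<pi> i) p * (\<Prod>j\<in>UNIV - {i}. M p $ j $ \<pi> j)))"
    unfolding det_def
    by (subst dd_sum) (auto simp: finite_permutations dd_mult dd_prod assms prod_diff)
  also have "\<dots> = (\<Sum>i\<in>UNIV. \<Sum>\<pi>\<in>?P. of_int (sign \<pi>) *
        (\<Prod>j\<in>UNIV. (\<chi> j. if j = i then (\<chi> k. dd d (\<lambda>q. M q $ i $ k) p) else M p $ j) $ j $ \<pi> j))"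
    unfolding row_prod sum_distrib_left by (rule sum.swap)
  finally show ?thesis by (simp add: det_def)
qed

section \<open>The inverse metric\<close>

locale tangential_metric =
  fixes U :: "('n::finite) pt set" and g :: "'n metric"
  assumes tang_metric: "tang_metric U g"
begin

lemma open_U: "open U"
  using tang_metric by (simp add: tang_metric_def)

lemma smooth_g: "smooth_on_pt U (g a b)"
  using tang_metric by (simp add: tang_metric_def)

lemma differentiable_g: "p \<in> U \<Longrightarrow> g a b differentiable (at p)"
  using smooth_g smooth_on_pt_differentiable by blast

lemma posdef_gmat: "p \<in> U \<Longrightarrow> posdef (gmat g p)"
  using tang_metric by (simp add: tang_metric_def gmat_def posdef_def quad_form_def)

lemma invertible_gmat: "p \<in> U \<Longrightarrow> invertible (gmat g p)"
  using posdef_gmat posdef_invertible by blast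

lemma gdet_pos: "p \<in> U \<Longrightarrow> gdet g p > 0"
  unfolding gdet_def using posdef_gmat posdef_det_pos by blast

lemma ginv_mult_g: "p \<in> U \<Longrightarrow> (\<Sum>k\<in>UNIV. ginv g a k p * g k b p) = (if a = b then 1 else 0)"
proof -
  assume p: "p \<in> U"
  have "(matrix_inv (gmat g p) ** gmat g p) $ a $ b = mat 1 $ a $ b"
    using matrix_inv_left[OF invertible_gmat[OF p]] by simp
  then show ?thesis by (simp add: matrix_matrix_mult_def ginv_def gmat_def mat_def)
qed

lemma g_mult_ginv: "p \<in> U \<Longrightarrow> (\<Sum>k\<in>UNIV. g a k p * ginv g k b p) = (if a = b then 1 else 0)"
proof -
  assume p: "p \<in> U"
  have "(gmat g p ** matrix_inv (gmat g p)) $ a $ b = mat 1 $ a $ b"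
    using matrix_inv_right[OF invertible_gmat[OF p]] by simp
  then show ?thesis by (simp add: matrix_matrix_mult_def ginv_def gmat_def mat_def)
qed

lemma ginv_cramer:
  assumes p: "p \<in> U"
  shows "ginv g k i p = det (\<chi> a b. if b = k then (if a = i then 1 else 0) else g a b p) / gdet g p"
proof -
  define G where "G = gmat g p"
  define B where "B = matrix_inv G"
  define e where "e = (axis i 1 :: real^'n)"
  have "G *v (B *v e) = e"
    using matrix_inv_right[OF invertible_gmat[OF p]] by (simp add: G_def B_def matrix_vector_mul_assoc)
  moreover have "det G \<noteq> 0" using gdet_pos[OF p] by (simp add: G_def gdet_def)
  ultimately have "B *v e = (\<chi> k. det (\<chi> i j. if j = k then e $ i else G $ i $ j) / det G)"
    using cramer by blast
  then have "(B *v e) $ k = det (\<chi> a b. if b = k then e $ a else G $ a $ b) / det G" by simp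
  moreover have "(B *v e) $ k = B $ k $ i"
  proof -
    have "(B *v e) $ k = (\<Sum>j\<in>UNIV. if j = i then B $ k $ j else 0)"
      unfolding matrix_vector_mult_def e_def axis_def by (simp add: if_distrib cong: if_cong)
    then show ?thesis by simp
  qed
  ultimately show ?thesis
    unfolding ginv_def B_def G_def gdet_def e_def axis_def gmat_def by (simp cong: if_cong)
qed

lemma differentiable_gdet: "p \<in> U \<Longrightarrow> gdet g differentiable (at p)"
  unfolding gdet_def[abs_def] by (rule det_differentiable) (simp add: gmat_def differentiable_g)

lemma differentiable_ginv:
  assumes p: "p \<in> U"
  shows "ginv g k i differentiable (at p)"
proof -
  define F where "F q = det (\<chi> a b. if b = k then (if a = i then 1 else 0) else g a b q) / gdet g q" for q
  have "(\<lambda>q. det (\<chi> a b. if b = k then (if a = i then 1 else (0::real)) else g a b q)) differentiable (at p)"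
  proof (rule det_differentiable)
    fix a b
    show "(\<lambda>q. (\<chi> a b. if b = k then (if a = i then 1 else (0::real)) else g a b q) $ a $ b) differentiable (at p)"
      by (cases "b = k") (simp_all add: differentiable_g[OF p])
  qed
  then have "F differentiable (at p)" unfolding F_def
    using differentiable_divide differentiable_gdet[OF p] gdet_pos[OF p] by fastforce
  then obtain F' where "(F has_derivative F') (at p)" using differentiable_def by blast
  then have "(ginv g k i has_derivative F') (at p)"
    by (rule has_derivative_transform_within_open[OF _ open_U p]) (simp add: F_def ginv_cramer)
  then show ?thesis using differentiable_def by blast
qed

text \<open>Differentiating \<open>g\<^sup>-\<^sup>1 g = 1\<close>.\<close>

lemma dd_ginv:
  assumes p: "p \<in> U"
  shows "dd d (ginv g a c) p = - (\<Sum>b\<in>UNIV. \<Sum>k\<in>UNIV. ginv g a k p * dd d (g k b) p * ginv g b c p)"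
proof -
  have deriv_g: "(\<Sum>k\<in>UNIV. dd d (ginv g a k) p * g k b p) = - (\<Sum>k\<in>UNIV. ginv g a k p * dd d (g k b) p)" for b
  proof -
    have "dd d (\<lambda>q. \<Sum>k\<in>UNIV. ginv g a k q * g k b q) p = dd d (\<lambda>q. if a = b then 1 else 0) p"
      by (rule dd_cong_open[OF open_U p]) (simp add: ginv_mult_g)
    moreover have "dd d (\<lambda>q. \<Sum>k\<in>UNIV. ginv g a k q * g k b q) p
        = (\<Sum>k\<in>UNIV. ginv g a k p * dd d (g k b) p + dd d (ginv g a k) p * g k b p)"
      by (simp add: dd_sum dd_mult differentiable_ginv differentiable_g p)
    ultimately show ?thesis by (simp add: sum.distrib eq_neg_iff_add_eq_0 add.commute)
  qed
  have "dd d (ginv g a c) p = (\<Sum>k\<in>UNIV. dd d (ginv g a k) p * (if k = c then 1 else 0))"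
    by (simp add: if_distrib[of "(*) _"] cong: if_cong)
  also have "\<dots> = (\<Sum>k\<in>UNIV. dd d (ginv g a k) p * (\<Sum>b\<in>UNIV. g k b p * ginv g b c p))"
    by (simp add: g_mult_ginv[OF p])
  also have "\<dots> = (\<Sum>b\<in>UNIV. (\<Sum>k\<in>UNIV. dd d (ginv g a k) p * g k b p) * ginv g b c p)"
    by (simp add: sum_distrib_left sum_distrib_right mult_ac) (rule sum.swap)
  also have "\<dots> = - (\<Sum>b\<in>UNIV. \<Sum>k\<in>UNIV. ginv g a k p * dd d (g k b) p * ginv g b c p)"
    by (simp add: deriv_g sum_distrib_right sum_negf)
  finally show ?thesis .
qed

text \<open>Smoothness of \<open>g\<^sup>-\<^sup>1\<close> is shown coinductively: by \<open>dd_ginv\<close>, the algebra generated by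
  the smooth functions and the entries of \<open>g\<^sup>-\<^sup>1\<close> is closed under \<open>dd\<close>.\<close>

inductive_set ginv_algebra :: "('n pt \<Rightarrow> real) set" where
  smooth: "smooth_on_pt U h \<Longrightarrow> h \<in> ginv_algebra"
| ginv: "ginv g a b \<in> ginv_algebra"
| add: "f \<in> ginv_algebra \<Longrightarrow> h \<in> ginv_algebra \<Longrightarrow> (\<lambda>q. f q + h q) \<in> ginv_algebra"
| mult: "f \<in> ginv_algebra \<Longrightarrow> h \<in> ginv_algebra \<Longrightarrow> (\<lambda>q. f q * h q) \<in> ginv_algebra"

lemma ginv_algebra_sum:
  "finite S \<Longrightarrow> (\<And>i. i \<in> S \<Longrightarrow> f i \<in> ginv_algebra) \<Longrightarrow> (\<lambda>q. \<Sum>i\<in>S. f i q) \<in> ginv_algebra"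
  by (induction S rule: finite_induct) (auto intro: ginv_algebra.intros smooth_on_pt_const)

lemma ginv_algebra_differentiable: "h \<in> ginv_algebra \<Longrightarrow> p \<in> U \<Longrightarrow> h differentiable (at p)"
  by (induction rule: ginv_algebra.induct)
    (auto intro: smooth_on_pt_differentiable differentiable_ginv)

lemma ginv_algebra_dd_closed:
  assumes "h \<in> ginv_algebra"
  shows "\<exists>h'\<in>ginv_algebra. \<forall>p\<in>U. dd d h p = h' p"
  using assms
proof (induction rule: ginv_algebra.induct)
  case (smooth h)
  then show ?case using smooth_on_pt_dd ginv_algebra.smooth by blast
next
  case (ginv a c)
  have "(\<lambda>q. - 1 * (\<Sum>b\<in>UNIV. \<Sum>k\<in>UNIV. ginv g a k q * dd d (g k b) q * ginv g b c q)) \<in> ginv_algebra"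
    by (intro ginv_algebra.intros ginv_algebra_sum smooth_on_pt_const smooth_on_pt_dd smooth_g finite)
  then show ?case using dd_ginv by force
next
  case (add f h)
  then obtain f' h' where "f' \<in> ginv_algebra" "\<forall>p\<in>U. dd d f p = f' p"
    and "h' \<in> ginv_algebra" "\<forall>p\<in>U. dd d h p = h' p" by blast
  with add.hyps show ?case
    by (intro bexI[of _ "\<lambda>q. f' q + h' q"]) (auto simp: dd_add ginv_algebra_differentiable intro: ginv_algebra.add)
next
  case (mult f h)
  then obtain f' h' where "f' \<in> ginv_algebra" "\<forall>p\<in>U. dd d f p = f' p"
    and "h' \<in> ginv_algebra" "\<forall>p\<in>U. dd d h p = h' p" by blast
  with mult.hyps show ?case
    by (intro bexI[of _ "\<lambda>q. f q * h' q + f' q * h q"])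
      (auto simp: dd_mult ginv_algebra_differentiable intro: ginv_algebra.add ginv_algebra.mult)
qed

lemma smooth_ginv: "smooth_on_pt U (ginv g a b)"
  by (rule smooth_on_pt_coinduct[OF open_U ginv_algebra_differentiable ginv_algebra_dd_closed ginv_algebra.ginv])

lemma dd_gdet:
  assumes p: "p \<in> U"
  shows "dd d (gdet g) p = gdet g p * (\<Sum>i\<in>UNIV. \<Sum>k\<in>UNIV. ginv g k i p * dd d (g i k) p)"
proof -
  have "dd d (gdet g) p = (\<Sum>i\<in>UNIV. det (\<chi> j. if j = i then (\<chi> k. dd d (\<lambda>q. gmat g q $ i $ k) p) else gmat g p $ j))"
    unfolding gdet_def[abs_def] by (rule dd_det) (simp add: gmat_def differentiable_g[OF p])
  also have "\<dots> = (\<Sum>i\<in>UNIV. ((\<chi> k. dd d (g i k) p) v* matrix_inv (gmat g p)) $ i * gdet g p)"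
    by (simp add: det_row_replace[OF invertible_gmat[OF p]] gdet_def gmat_def)
  also have "\<dots> = gdet g p * (\<Sum>i\<in>UNIV. \<Sum>k\<in>UNIV. ginv g k i p * dd d (g i k) p)"
    by (simp add: vector_matrix_mult_def ginv_def sum_distrib_left mult_ac)
  finally show ?thesis .
qed

lemma dd_ln_gdet:
  assumes p: "p \<in> U"
  shows "dd d (\<lambda>q. ln (gdet g q)) p = (\<Sum>i\<in>UNIV. \<Sum>k\<in>UNIV. ginv g k i p * dd d (g i k) p)"
proof -
  obtain D where D: "(gdet g has_derivative D) (at p)"
    using differentiable_gdet[OF p] differentiable_def by blast
  have "((\<lambda>q. ln (gdet g q)) has_derivative (\<lambda>y. inverse (gdet g p) * D y)) (at p)"
    using has_derivative_compose[OF D DERIV_ln[OF gdet_pos[OF p], unfolded has_field_derivative_def]] .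
  then have "dd d (\<lambda>q. ln (gdet g q)) p = inverse (gdet g p) * dd d (gdet g) p"
    using dd_eq_derivative[OF D] dd_eq_derivative by simp
  then show ?thesis using dd_gdet[OF p] gdet_pos[OF p] by simp
qed

lemma q2_pos:
  assumes p: "p \<in> U" and \<xi>: "\<xi> \<noteq> 0"
  shows "q2 g p \<xi> > 0"
proof -
  define G where "G = gmat g p"
  define y where "y = matrix_inv G *v \<xi>"
  have Gy: "G *v y = \<xi>"
    using matrix_inv_right[OF invertible_gmat[OF p]] by (simp add: y_def G_def matrix_vector_mul_assoc)
  then have "y \<noteq> 0" using \<xi> by auto
  have "q2 g p \<xi> = (\<Sum>a\<in>UNIV. \<xi> $ a * y $ a)"
    by (simp add: q2_def y_def matrix_vector_mult_def sum_distrib_left ginv_def G_def mult_ac)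
  also have "\<dots> = quad_form G y"
    by (simp add: Gy[symmetric] quad_form_def matrix_vector_mult_def sum_distrib_left sum_distrib_right mult_ac)
  also have "\<dots> > 0" using posdef_gmat[OF p] \<open>y \<noteq> 0\<close> by (simp add: G_def posdef_def)
  finally show ?thesis .
qed

end

section \<open>Multi-indices and atoms\<close>

definition univ_list :: "('n::{finite,linorder}) list" where
  "univ_list = sorted_list_of_set UNIV"

lemma sum_list_univ_list: "(\<Sum>\<alpha>\<leftarrow>univ_list. f \<alpha>) = (\<Sum>\<alpha>\<in>UNIV. f \<alpha>)"
  by (simp add: univ_list_def sum_list_distinct_conv_sum_set)

definition mi_unit :: "'n \<Rightarrow> 'n \<Rightarrow> nat" where
  "mi_unit \<alpha> = (\<lambda>\<beta>. if \<beta> = \<alpha> then 1 else 0)"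

lemma mset_mi_list: "mset (mi_list K) = (\<Sum>\<alpha>\<in>UNIV. replicate_mset (K \<alpha>) \<alpha>)"
  unfolding mi_list_def univ_list_def[symmetric] mset_concat
  by (simp add: o_def sum_list_univ_list)

lemma length_mi_list: "length (mi_list K) = mi_abs K"
  by (simp add: mi_list_def length_concat univ_list_def[symmetric] o_def sum_list_univ_list mi_abs_def)

lemma mset_mi_list_incr:
  fixes K :: "'n::{finite,linorder} \<Rightarrow> nat"
  shows "mset (mi_list (K(\<gamma> := Suc (K \<gamma>)))) = mset (mi_list K) + {#\<gamma>#}"
proof -
  have "(\<Sum>\<alpha>\<in>UNIV. replicate_mset ((K(\<gamma> := Suc (K \<gamma>))) \<alpha>) \<alpha>)
     = (\<Sum>\<alpha>\<in>UNIV. replicate_mset (K \<alpha>) \<alpha> + (if \<alpha> = \<gamma> then {#\<gamma>#} else {#}))"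
    by (rule sum.cong) auto
  then show ?thesis by (simp add: mset_mi_list sum.distrib)
qed

lemma mi_list_zero [simp]: "mi_list (\<lambda>_. 0) = []"
  by (simp add: mi_list_def)

lemma mi_list_unit [simp]: "mi_list (mi_unit \<gamma>) = [\<gamma>]"
proof -
  have "mi_unit \<gamma> = (\<lambda>_. 0)(\<gamma> := Suc 0)" by (auto simp: mi_unit_def)
  then have "mset (mi_list (mi_unit \<gamma>)) = {#\<gamma>#}"
    using mset_mi_list_incr[of "\<lambda>_. 0" \<gamma>] by simp
  then show ?thesis by (cases "mi_list (mi_unit \<gamma>)") auto
qed

lemma mi_abs_incr: "mi_abs (K(\<gamma> := Suc (K \<gamma>))) = Suc (mi_abs K)"
  by (simp add: mi_abs_def sum.remove[of UNIV \<gamma>] sum.cong[OF refl, of "UNIV - {\<gamma>}" "K(\<gamma> := Suc (K \<gamma>))" K])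

lemma mi_abs_decr: "K \<gamma> \<noteq> 0 \<Longrightarrow> Suc (mi_abs (K(\<gamma> := K \<gamma> - 1))) = mi_abs K"
  using mi_abs_incr[of "K(\<gamma> := K \<gamma> - 1)" \<gamma>] by (simp add: fun_upd_idem)

lemma mi_abs_add: "mi_abs (\<lambda>\<alpha>. K \<alpha> + L \<alpha>) = mi_abs K + mi_abs L"
  by (simp add: mi_abs_def sum.distrib)

lemma mi_abs_unit [simp]: "mi_abs (mi_unit \<gamma>) = 1"
  by (simp add: mi_abs_def mi_unit_def)

lemma mi_abs_zero [simp]: "mi_abs (\<lambda>_. 0) = 0"
  by (simp add: mi_abs_def)

fun atm_deriv :: "'n option \<Rightarrow> 'n atm \<Rightarrow> 'n atm" where
  "atm_deriv (Some \<gamma>) (u, \<alpha>, \<beta>, K, d) = (u, \<alpha>, \<beta>, K(\<gamma> := Suc (K \<gamma>)), d)"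
| "atm_deriv None (u, \<alpha>, \<beta>, K, d) = (u, \<alpha>, \<beta>, K, Suc d)"

lemma atm_w_deriv: "atm_w (atm_deriv d a) = Suc (atm_w a)"
  by (cases a; cases d) (auto simp: mi_abs_incr)

lemma atm_nw_deriv: "atm_nw (atm_deriv d a) = (if d = None then Suc (atm_nw a) else atm_nw a)"
  by (cases a; cases d) auto

definition ginv_atm :: "'n \<Rightarrow> 'n \<Rightarrow> 'n atm" where
  "ginv_atm \<alpha> \<beta> = (True, \<alpha>, \<beta>, (\<lambda>_. 0), 0)"

lemma atm_val_ginv_atm: "atm_val g (ginv_atm \<alpha> \<beta>) = ginv g \<alpha> \<beta>"
  by (simp add: ginv_atm_def fun_eq_iff)

lemma atm_w_ginv_atm [simp]: "atm_w (ginv_atm \<alpha> \<beta>) = 0"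
  and atm_nw_ginv_atm [simp]: "atm_nw (ginv_atm \<alpha> \<beta>) = 0"
  by (simp_all add: ginv_atm_def)

locale ordered_tangential_metric = tangential_metric U g
  for U :: "('n::{finite,linorder}) pt set" and g :: "'n metric"
begin

lemma smooth_atm_val: "smooth_on_pt U (atm_val g a)"
proof -
  obtain u \<alpha> \<beta> K d where a: "a = (u, \<alpha>, \<beta>, K, d)" by (cases a) auto
  have "smooth_on_pt U (if u then ginv g \<alpha> \<beta> else g \<alpha> \<beta>)"
    using smooth_ginv smooth_g by simp
  then show ?thesis unfolding a atm_val.simps[abs_def] by (rule smooth_on_pt_iterd)
qed

lemma differentiable_atm_val: "p \<in> U \<Longrightarrow> atm_val g a differentiable (at p)"
  using smooth_atm_val smooth_on_pt_differentiable by blast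

text \<open>A tangential derivative lands in the right slot of the multi-index only because
  partial derivatives commute.\<close>

lemma dd_atm_val:
  assumes p: "p \<in> U"
  shows "dd d (atm_val g a) p = atm_val g (atm_deriv d a) p"
proof -
  obtain u \<alpha> \<beta> K n where a: "a = (u, \<alpha>, \<beta>, K, n)" by (cases a) auto
  define h where "h = (if u then ginv g \<alpha> \<beta> else g \<alpha> \<beta>)"
  have "dd d (atm_val g a) p = iterd ((map Some (mi_list K) @ replicate n None) @ [d]) h p"
    by (simp add: a h_def iterd_append atm_val.simps[abs_def])
  also have "\<dots> = atm_val g (atm_deriv d a) p"
  proof (cases d)
    case None
    then show ?thesis by (simp add: a h_def replicate_append_same)
  next
    case (Some \<gamma>)
    have "smooth_on_pt U h" using smooth_ginv smooth_g by (simp add: h_def)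
    moreover have "mset ((map Some (mi_list K) @ replicate n None) @ [d]) =
          mset (map Some (mi_list (K(\<gamma> := Suc (K \<gamma>)))) @ replicate n None)"
      by (simp add: Some mset_mi_list_incr)
    ultimately show ?thesis
      using iterd_mset_eq[OF open_U _ p] by (simp add: a h_def Some)
  qed
  finally show ?thesis .
qed

end

section \<open>Formal symbols\<close>

text \<open>Symbols are computed on single-monomial terms \<open>(k, M)\<close>, standing for
  \<open>|\<xi>|\<^sup>-\<^sup>k M\<close>; a list of them stands for their sum.\<close>

type_synonym 'n strm = "int \<times> 'n mnm"

definition xi_norm :: "('n::finite) metric \<Rightarrow> 'n pt \<Rightarrow> real^'n \<Rightarrow> real" where
  "xi_norm g p \<xi> = sqrt (q2 g p \<xi>)"

definition atms_val :: "('n::{finite,linorder}) metric \<Rightarrow> 'n atm list \<Rightarrow> 'n pt \<Rightarrow> real" where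
  "atms_val g as p = (\<Prod>a\<leftarrow>as. atm_val g a p)"

definition xi_mono :: "('n::finite \<Rightarrow> nat) \<Rightarrow> real^'n \<Rightarrow> real" where
  "xi_mono e \<xi> = (\<Prod>\<alpha>\<in>UNIV. (\<xi>$\<alpha>) ^ (e \<alpha>))"

fun strm_val :: "('n::{finite,linorder}) metric \<Rightarrow> 'n strm \<Rightarrow> 'n sym" where
  "strm_val g (k, (c, as, e)) p \<xi> = c * complex_of_real (xi_norm g p \<xi> powi (- k) * atms_val g as p * xi_mono e \<xi>)"

definition strms_val :: "('n::{finite,linorder}) metric \<Rightarrow> 'n strm list \<Rightarrow> 'n sym" where
  "strms_val g R p \<xi> = (\<Sum>t\<leftarrow>R. strm_val g t p \<xi>)"

lemma strms_val_Nil [simp]: "strms_val g [] p \<xi> = 0"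
  and strms_val_Cons [simp]: "strms_val g (t # R) p \<xi> = strm_val g t p \<xi> + strms_val g R p \<xi>"
  and strms_val_append [simp]: "strms_val g (R @ S) p \<xi> = strms_val g R p \<xi> + strms_val g S p \<xi>"
  by (simp_all add: strms_val_def)

lemma strms_val_map: "strms_val g (map h xs) p \<xi> = (\<Sum>x\<leftarrow>xs. strm_val g (h x) p \<xi>)"
  by (simp add: strms_val_def o_def)

lemma strms_val_concat_map: "strms_val g (concat (map f xs)) p \<xi> = (\<Sum>x\<leftarrow>xs. strms_val g (f x) p \<xi>)"
  by (induction xs) simp_all

lemma atms_val_append: "atms_val g (as @ bs) p = atms_val g as p * atms_val g bs p"
  by (simp add: atms_val_def)

lemma xi_mono_add: "xi_mono (\<lambda>\<alpha>. e \<alpha> + e' \<alpha>) \<xi> = xi_mono e \<xi> * xi_mono e' \<xi>"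
  by (simp add: xi_mono_def power_add prod.distrib)

lemma xi_mono_unit: "xi_mono (mi_unit \<alpha>) \<xi> = \<xi> $ \<alpha>"
  by (simp add: xi_mono_def mi_unit_def if_distrib[of "\<lambda>n. _ ^ n"] cong: if_cong)

text \<open>The parity defect \<open>\<pi>\<close> records how often the parity sum has been flipped (by a
  \<open>\<xi>\<close>-derivative or a tangential \<open>x\<close>-derivative); in the recursion such derivatives
  occur in pairs.\<close>

fun strm_graded :: "nat \<Rightarrow> nat \<Rightarrow> ('n::finite) strm \<Rightarrow> bool" where
  "strm_graded w \<pi> (k, M) \<longleftrightarrow> mnm_w M = w \<and> even (mnm_w M + mnm_nw M + mnm_deg M + \<pi>)"

definition strms_graded :: "nat \<Rightarrow> nat \<Rightarrow> ('n::finite) strm list \<Rightarrow> bool" where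
  "strms_graded w \<pi> R \<longleftrightarrow> (\<forall>t\<in>set R. strm_graded w \<pi> t)"

lemma strms_graded_Nil [simp]: "strms_graded w \<pi> []"
  and strms_graded_append: "strms_graded w \<pi> R \<Longrightarrow> strms_graded w \<pi> S \<Longrightarrow> strms_graded w \<pi> (R @ S)"
  and strms_graded_concat_map:
    "(\<And>x. x \<in> set xs \<Longrightarrow> strms_graded w \<pi> (f x)) \<Longrightarrow> strms_graded w \<pi> (concat (map f xs))"
  by (auto simp: strms_graded_def)

lemma strms_graded_parity_cong: "strms_graded w \<pi> R \<Longrightarrow> even (\<pi> + \<pi>') \<Longrightarrow> strms_graded w \<pi>' R"
proof -
  have "strm_graded w \<pi> t \<Longrightarrow> even (\<pi> + \<pi>') \<Longrightarrow> strm_graded w \<pi>' t" for t :: "'a strm"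
    by (cases t) (auto simp: even_add)
  then show "strms_graded w \<pi> R \<Longrightarrow> even (\<pi> + \<pi>') \<Longrightarrow> strms_graded w \<pi>' R"
    by (auto simp: strms_graded_def)
qed

fun strm_scale :: "complex \<Rightarrow> 'n strm \<Rightarrow> 'n strm" where
  "strm_scale c (k, (c', as, e)) = (k, (c * c', as, e))"

definition strms_scale :: "complex \<Rightarrow> 'n strm list \<Rightarrow> 'n strm list" where
  "strms_scale c R = map (strm_scale c) R"

definition strms_shift :: "int \<Rightarrow> 'n strm list \<Rightarrow> 'n strm list" where
  "strms_shift j R = map (\<lambda>(k, M). (k + j, M)) R"

fun strm_mult :: "'n strm \<Rightarrow> 'n strm \<Rightarrow> 'n strm" where
  "strm_mult (k1, (c1, as1, e1)) (k2, (c2, as2, e2)) = (k1 + k2, (c1 * c2, as1 @ as2, \<lambda>\<alpha>. e1 \<alpha> + e2 \<alpha>))"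

definition strms_mult :: "'n strm list \<Rightarrow> 'n strm list \<Rightarrow> 'n strm list" where
  "strms_mult R S = concat (map (\<lambda>t. map (strm_mult t) S) R)"

lemma strms_val_scale: "strms_val g (strms_scale c R) p \<xi> = c * strms_val g R p \<xi>"
proof -
  have "strm_val g (strm_scale c t) p \<xi> = c * strm_val g t p \<xi>" for t
    by (cases t) auto
  then show ?thesis by (induction R) (simp_all add: strms_scale_def algebra_simps)
qed

lemma strms_val_shift:
  assumes "xi_norm g p \<xi> \<noteq> 0"
  shows "strms_val g (strms_shift j R) p \<xi> = complex_of_real (xi_norm g p \<xi> powi (- j)) * strms_val g R p \<xi>"
proof (induction R)
  case (Cons t R)
  obtain k c as e where t: "t = (k, (c, as, e))" by (cases t) auto
  have "xi_norm g p \<xi> powi (- (k + j)) = xi_norm g p \<xi> powi (- k) * xi_norm g p \<xi> powi (- j)"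
    using assms by (simp add: power_int_add[symmetric])
  with Cons show ?case by (simp add: strms_shift_def t algebra_simps)
qed (simp add: strms_shift_def)

lemma strms_val_mult:
  assumes "xi_norm g p \<xi> \<noteq> 0"
  shows "strms_val g (strms_mult R S) p \<xi> = strms_val g R p \<xi> * strms_val g S p \<xi>"
proof -
  have strm: "strm_val g (strm_mult t1 t2) p \<xi> = strm_val g t1 p \<xi> * strm_val g t2 p \<xi>" for t1 t2
  proof -
    obtain k1 c1 as1 e1 where t1: "t1 = (k1, (c1, as1, e1))" by (cases t1) auto
    obtain k2 c2 as2 e2 where t2: "t2 = (k2, (c2, as2, e2))" by (cases t2) auto
    have "xi_norm g p \<xi> powi (- (k1 + k2)) = xi_norm g p \<xi> powi (- k1) * xi_norm g p \<xi> powi (- k2)"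
      using assms by (simp add: power_int_add[symmetric])
    then show ?thesis by (simp add: t1 t2 atms_val_append xi_mono_add mult_ac)
  qed
  have "strms_val g (map (strm_mult t) S) p \<xi> = strm_val g t p \<xi> * strms_val g S p \<xi>" for t
    by (induction S) (simp_all add: strm algebra_simps)
  then show ?thesis
    by (induction R) (simp_all add: strms_mult_def algebra_simps)
qed

lemma strms_graded_scale: "strms_graded w \<pi> R \<Longrightarrow> strms_graded w \<pi> (strms_scale c R)"
proof -
  have "strm_graded w \<pi> (strm_scale c t) = strm_graded w \<pi> t" for t :: "'a strm"
    by (cases t) auto
  then show "strms_graded w \<pi> R \<Longrightarrow> strms_graded w \<pi> (strms_scale c R)"
    by (auto simp: strms_graded_def strms_scale_def)
qed

lemma strms_graded_shift: "strms_graded w \<pi> R \<Longrightarrow> strms_graded w \<pi> (strms_shift j R)"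
  by (auto simp: strms_graded_def strms_shift_def)

lemma strms_graded_mult:
  assumes "strms_graded w1 \<pi>1 R" "strms_graded w2 \<pi>2 S"
  shows "strms_graded (w1 + w2) (\<pi>1 + \<pi>2) (strms_mult R S)"
proof -
  have "strm_graded (w1 + w2) (\<pi>1 + \<pi>2) (strm_mult t1 t2)"
    if "strm_graded w1 \<pi>1 t1" "strm_graded w2 \<pi>2 t2" for t1 t2 :: "'a strm"
  proof -
    obtain k1 c1 as1 e1 where t1: "t1 = (k1, (c1, as1, e1))" by (cases t1) auto
    obtain k2 c2 as2 e2 where t2: "t2 = (k2, (c2, as2, e2))" by (cases t2) auto
    have "even (mnm_w (snd t1) + mnm_nw (snd t1) + mnm_deg (snd t1) + \<pi>1)"
      and "even (mnm_w (snd t2) + mnm_nw (snd t2) + mnm_deg (snd t2) + \<pi>2)"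
      using that by (auto simp: t1 t2 simp del: even_add)
    from dvd_add[OF this] that show ?thesis
      by (auto simp: t1 t2 mi_abs_add add_ac simp del: even_add)
  qed
  with assms show ?thesis
    by (fastforce simp: strms_graded_def strms_mult_def simp del: strm_graded.simps)
qed

section \<open>Derivatives of formal symbols\<close>

lemma has_vector_derivative_strm_form:
  fixes q A X :: "real \<Rightarrow> real"
  assumes q: "(q has_real_derivative q') (at 0)" and pos: "q 0 > 0"
    and A: "(A has_real_derivative A') (at 0)" and X: "(X has_real_derivative X') (at 0)"
  shows "((\<lambda>s. c * complex_of_real (sqrt (q s) powi (- k) * A s * X s)) has_vector_derivative
     c * complex_of_real ((- of_int k / 2) * sqrt (q 0) powi (- k - 2) * q' * A 0 * X 0
                          + sqrt (q 0) powi (- k) * (A' * X 0 + A 0 * X'))) (at 0)"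
proof -
  have "((\<lambda>s. sqrt (q s)) has_real_derivative inverse (sqrt (q 0)) / 2 * q') (at 0)"
    using DERIV_chain2[OF DERIV_real_sqrt[OF pos] q] .
  then have N: "((\<lambda>s. sqrt (q s) powi (- k)) has_real_derivative
      of_int (- k) * sqrt (q 0) powi (- k - 1) * (inverse (sqrt (q 0)) / 2 * q')) (at 0)"
    by (rule DERIV_power_int) (use pos in simp)
  have "sqrt (q 0) powi ((- k - 1) + (- 1)) = sqrt (q 0) powi (- k - 1) * sqrt (q 0) powi (- 1)"
    by (rule power_int_add) (use pos in simp)
  then have "sqrt (q 0) powi (- k - 1) * inverse (sqrt (q 0)) = sqrt (q 0) powi (- k - 2)"
    by (simp add: power_int_minus1_right algebra_simps)
  then show ?thesis
    by (intro has_vector_derivative_eq_rhs[OF has_vector_derivative_mult_right[OF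
          has_vector_derivative_of_real[OF DERIV_mult[OF DERIV_mult[OF N A] X]]]])
      (simp add: algebra_simps)
qed

lemma has_real_derivative_xi_mono:
  fixes \<xi> :: "real^'n::finite"
  shows "((\<lambda>s. xi_mono e (\<xi> + s *\<^sub>R axis \<gamma> 1)) has_real_derivative
     (if e \<gamma> = 0 then 0 else of_nat (e \<gamma>) * xi_mono (e(\<gamma> := e \<gamma> - 1)) \<xi>)) (at 0)"
proof -
  define C where "C = (\<Prod>\<alpha>\<in>UNIV - {\<gamma>}. (\<xi> $ \<alpha>) ^ (e \<alpha>))"
  have split: "xi_mono e' \<xi>' = (\<xi>' $ \<gamma>) ^ (e' \<gamma>) * (\<Prod>\<alpha>\<in>UNIV - {\<gamma>}. (\<xi>' $ \<alpha>) ^ (e' \<alpha>))" for e' \<xi>'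
    unfolding xi_mono_def by (rule prod.remove) auto
  have "xi_mono e (\<xi> + s *\<^sub>R axis \<gamma> 1) = (\<xi> $ \<gamma> + s) ^ (e \<gamma>) * C" for s
    unfolding split C_def by (auto simp: axis_def intro!: prod.cong)
  moreover have "xi_mono (e(\<gamma> := e \<gamma> - 1)) \<xi> = (\<xi> $ \<gamma>) ^ (e \<gamma> - 1) * C"
    unfolding split C_def by (auto intro!: prod.cong)
  moreover have "((\<lambda>s. (\<xi> $ \<gamma> + s) ^ (e \<gamma>) * C) has_real_derivative
      of_nat (e \<gamma>) * (1 * (\<xi> $ \<gamma> + 0) ^ (e \<gamma> - Suc 0)) * C) (at 0)"
    by (intro DERIV_cmult_right DERIV_power DERIV_add_const DERIV_ident)
  ultimately show ?thesis by (auto elim: DERIV_cong)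
qed

lemma has_real_derivative_q2_xi:
  "((\<lambda>s. q2 g p (\<xi> + s *\<^sub>R axis \<gamma> 1)) has_real_derivative
      (\<Sum>\<beta>\<in>UNIV. ginv g \<gamma> \<beta> p * \<xi>$\<beta>) + (\<Sum>\<beta>\<in>UNIV. ginv g \<beta> \<gamma> p * \<xi>$\<beta>)) (at 0)"
proof -
  have comp: "((\<lambda>s. (\<xi> + s *\<^sub>R axis \<gamma> 1) $ \<alpha>) has_real_derivative of_bool (\<alpha> = \<gamma>)) (at 0)" for \<alpha>
    by (auto simp: axis_def intro!: derivative_eq_intros)
  have "((\<lambda>s. q2 g p (\<xi> + s *\<^sub>R axis \<gamma> 1)) has_real_derivative
      (\<Sum>\<alpha>\<in>UNIV. \<Sum>\<beta>\<in>UNIV. of_bool (\<alpha> = \<gamma>) * (ginv g \<alpha> \<beta> p * \<xi>$\<beta>) + of_bool (\<beta> = \<gamma>) * (ginv g \<alpha> \<beta> p * \<xi>$\<alpha>))) (at 0)"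
    unfolding q2_def
    by (intro DERIV_sum) (rule DERIV_cong[OF DERIV_mult[OF DERIV_cmult[OF comp] comp]], simp add: algebra_simps)
  then show ?thesis
    by (simp add: sum.distrib sum_distrib_left[symmetric])
qed

fun single_updates :: "('a \<Rightarrow> 'a) \<Rightarrow> 'a list \<Rightarrow> 'a list list" where
  "single_updates f [] = []"
| "single_updates f (a # as) = (f a # as) # map (Cons a) (single_updates f as)"

text \<open>The first group of terms comes from \<open>\<partial>|\<xi>|\<^sup>-\<^sup>k = -k/2 |\<xi>|\<^sup>-\<^sup>k\<^sup>-\<^sup>2 \<partial>q\<^sub>2\<close>,
  the second from the Leibniz rule for the product of atoms.\<close>

fun strm_dx :: "('n::{finite,linorder}) option \<Rightarrow> 'n strm \<Rightarrow> 'n strm list" where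
  "strm_dx d (k, (c, as, e)) =
     concat (map (\<lambda>\<alpha>. map (\<lambda>\<beta>. (k + 2, (c * complex_of_real (- of_int k / 2),
         atm_deriv d (ginv_atm \<alpha> \<beta>) # as, \<lambda>\<gamma>. e \<gamma> + mi_unit \<alpha> \<gamma> + mi_unit \<beta> \<gamma>))) univ_list) univ_list)
     @ map (\<lambda>bs. (k, (c, bs, e))) (single_updates (atm_deriv d) as)"

definition strms_dx :: "('n::{finite,linorder}) option \<Rightarrow> 'n strm list \<Rightarrow> 'n strm list" where
  "strms_dx d R = concat (map (strm_dx d) R)"

fun strm_dxi :: "'n::{finite,linorder} \<Rightarrow> 'n strm \<Rightarrow> 'n strm list" where
  "strm_dxi \<gamma> (k, (c, as, e)) =
     map (\<lambda>\<beta>. (k + 2, (c * complex_of_real (- of_int k / 2), ginv_atm \<gamma> \<beta> # as, \<lambda>\<alpha>. e \<alpha> + mi_unit \<beta> \<alpha>))) univ_list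
   @ map (\<lambda>\<beta>. (k + 2, (c * complex_of_real (- of_int k / 2), ginv_atm \<beta> \<gamma> # as, \<lambda>\<alpha>. e \<alpha> + mi_unit \<beta> \<alpha>))) univ_list
   @ (if e \<gamma> = 0 then [] else [(k, (c * of_nat (e \<gamma>), as, e(\<gamma> := e \<gamma> - 1)))])"

definition strms_dxi :: "'n::{finite,linorder} \<Rightarrow> 'n strm list \<Rightarrow> 'n strm list" where
  "strms_dxi \<gamma> R = concat (map (strm_dxi \<gamma>) R)"

lemma strms_val_map_extra_atm:
  "strms_val g (map (\<lambda>\<beta>. (k, (c, h \<beta> # as, \<lambda>\<alpha>. e \<alpha> + mi_unit \<beta> \<alpha>))) univ_list) p \<xi>
     = c * complex_of_real (xi_norm g p \<xi> powi (- k) * atms_val g as p * xi_mono e \<xi>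
                            * (\<Sum>\<beta>\<in>UNIV. atm_val g (h \<beta>) p * \<xi>$\<beta>))"
  by (simp add: strms_val_map sum_list_univ_list atms_val_def xi_mono_add xi_mono_unit
      of_real_sum sum_distrib_left mult_ac)

lemma strms_val_strm_dxi:
  "strms_val g (strm_dxi \<gamma> (k, (c, as, e))) p \<xi> =
     c * complex_of_real ((- of_int k / 2) * xi_norm g p \<xi> powi (- k - 2)
           * ((\<Sum>\<beta>\<in>UNIV. ginv g \<gamma> \<beta> p * \<xi>$\<beta>) + (\<Sum>\<beta>\<in>UNIV. ginv g \<beta> \<gamma> p * \<xi>$\<beta>))
           * atms_val g as p * xi_mono e \<xi>
         + xi_norm g p \<xi> powi (- k) * (atms_val g as p
           * (if e \<gamma> = 0 then 0 else of_nat (e \<gamma>) * xi_mono (e(\<gamma> := e \<gamma> - 1)) \<xi>)))"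
  unfolding strm_dxi.simps strms_val_append strms_val_map_extra_atm
  by (simp add: atm_val_ginv_atm algebra_simps)

lemma strm_graded_transfer:
  assumes "strm_graded w \<pi> (k, (c, as, e))"
    and "sum_list (map atm_w bs) = sum_list (map atm_w as) + i" "w' = w + i"
    and "sum_list (map atm_nw bs) = sum_list (map atm_nw as) + j"
    and "mi_abs e' + a = mi_abs e + b" "even (i + j + a + b + \<pi>' + \<pi>)"
  shows "strm_graded w' \<pi>' (k', (c', bs, e'))"
proof -
  from assms(1) have "sum_list (map atm_w as) = w"
    "even (sum_list (map atm_w as) + sum_list (map atm_nw as) + mi_abs e + \<pi>)"
    by (auto simp del: even_add)
  moreover have "even (w + i + (n + j) + d' + \<pi>')"
    if "even (w + n + d + \<pi>)" "d' + a = d + b" "even (i + j + a + b + \<pi>' + \<pi>)" for n d d' :: nat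
    using that by presburger
  ultimately show ?thesis using assms(2-6) by (simp del: even_add)
qed

lemma strms_graded_dx:
  assumes "strms_graded w \<pi> R"
  shows "strms_graded (Suc w) (\<pi> + (if d = None then 0 else 1)) (strms_dx d R)"
proof -
  have updates: "sum_list (map atm_w bs) = sum_list (map atm_w as) + 1 \<and>
      sum_list (map atm_nw bs) = sum_list (map atm_nw as) + (if d = None then 1 else 0)"
    if "bs \<in> set (single_updates (atm_deriv d) as)" for as bs
    using that by (induction as arbitrary: bs) (auto simp: atm_w_deriv atm_nw_deriv mi_abs_incr)
  have "strm_graded (Suc w) (\<pi> + (if d = None then 0 else 1)) t'"
    if t: "strm_graded w \<pi> (k, (c, as, e))" and t': "t' \<in> set (strm_dx d (k, (c, as, e)))" for k c as e t'
  proof -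
    from t' consider
        (ginv) \<alpha> \<beta> where "t' = (k + 2, (c * complex_of_real (- of_int k / 2),
           atm_deriv d (ginv_atm \<alpha> \<beta>) # as, \<lambda>\<gamma>. e \<gamma> + mi_unit \<alpha> \<gamma> + mi_unit \<beta> \<gamma>))"
      | (leibniz) bs where "bs \<in> set (single_updates (atm_deriv d) as)" "t' = (k, (c, bs, e))"
      by auto
    then show ?thesis
    proof cases
      case ginv
      show ?thesis unfolding ginv
        by (rule strm_graded_transfer[OF t, where i = 1 and j = "if d = None then 1 else 0" and a = 0 and b = 2])
          (simp_all add: atm_w_deriv atm_nw_deriv mi_abs_add)
    next
      case leibniz
      show ?thesis unfolding leibniz(2)
        by (rule strm_graded_transfer[OF t, where i = 1 and j = "if d = None then 1 else 0" and a = 0 and b = 0])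
          (simp_all add: updates[OF leibniz(1)])
    qed
  qed
  with assms show ?thesis
    by (auto simp: strms_graded_def strms_dx_def simp del: strm_graded.simps)
qed

lemma strms_graded_dxi:
  assumes "strms_graded w \<pi> R"
  shows "strms_graded w (Suc \<pi>) (strms_dxi \<gamma> R)"
proof -
  have "strm_graded w (Suc \<pi>) t'"
    if t: "strm_graded w \<pi> (k, (c, as, e))" and t': "t' \<in> set (strm_dxi \<gamma> (k, (c, as, e)))" for k c as e t'
  proof -
    from t' consider
        (left) \<beta> where "t' = (k + 2, (c * complex_of_real (- of_int k / 2), ginv_atm \<gamma> \<beta> # as, \<lambda>\<alpha>. e \<alpha> + mi_unit \<beta> \<alpha>))"
      | (right) \<beta> where "t' = (k + 2, (c * complex_of_real (- of_int k / 2), ginv_atm \<beta> \<gamma> # as, \<lambda>\<alpha>. e \<alpha> + mi_unit \<beta> \<alpha>))"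
      | (mono) "e \<gamma> \<noteq> 0" "t' = (k, (c * of_nat (e \<gamma>), as, e(\<gamma> := e \<gamma> - 1)))"
      by (auto split: if_splits)
    then show ?thesis
    proof cases
      case left
      show ?thesis unfolding left
        by (rule strm_graded_transfer[OF t, where i = 0 and j = 0 and a = 0 and b = 1]) (simp_all add: mi_abs_add)
    next
      case right
      show ?thesis unfolding right
        by (rule strm_graded_transfer[OF t, where i = 0 and j = 0 and a = 0 and b = 1]) (simp_all add: mi_abs_add)
    next
      case mono
      show ?thesis unfolding mono(2)
        by (rule strm_graded_transfer[OF t, where i = 0 and j = 0 and a = 1 and b = 0])
          (use mi_abs_decr[of e \<gamma>, OF mono(1)] in simp_all)
    qed
  qed
  with assms show ?thesis
    by (auto simp: strms_graded_def strms_dxi_def simp del: strm_graded.simps)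
qed

lemma strms_val_map2_extra_atm:
  "strms_val g (concat (map (\<lambda>\<alpha>. map (\<lambda>\<beta>. (k, (c, h \<alpha> \<beta> # as, \<lambda>\<gamma>. e \<gamma> + mi_unit \<alpha> \<gamma> + mi_unit \<beta> \<gamma>)))
        univ_list) univ_list)) p \<xi>
     = c * complex_of_real (xi_norm g p \<xi> powi (- k) * atms_val g as p * xi_mono e \<xi>
                            * (\<Sum>\<alpha>\<in>UNIV. \<Sum>\<beta>\<in>UNIV. atm_val g (h \<alpha> \<beta>) p * \<xi>$\<alpha> * \<xi>$\<beta>))"
  by (simp add: strms_val_concat_map strms_val_map_extra_atm sum_list_univ_list xi_mono_add xi_mono_unit
      of_real_sum sum_distrib_left mult_ac)

lemma strms_val_strm_dx:
  "strms_val g (strm_dx d (k, (c, as, e))) p \<xi> =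
     c * complex_of_real ((- of_int k / 2) * xi_norm g p \<xi> powi (- k - 2)
           * (\<Sum>\<alpha>\<in>UNIV. \<Sum>\<beta>\<in>UNIV. atm_val g (atm_deriv d (ginv_atm \<alpha> \<beta>)) p * \<xi>$\<alpha> * \<xi>$\<beta>)
           * atms_val g as p * xi_mono e \<xi>
         + xi_norm g p \<xi> powi (- k) * ((\<Sum>bs\<leftarrow>single_updates (atm_deriv d) as. atms_val g bs p) * xi_mono e \<xi>))"
proof -
  have leibniz: "strms_val g (map (\<lambda>bs. (k, (c, bs, e))) (single_updates (atm_deriv d) as)) p \<xi>
      = c * complex_of_real (xi_norm g p \<xi> powi (- k) * ((\<Sum>bs\<leftarrow>single_updates (atm_deriv d) as. atms_val g bs p) * xi_mono e \<xi>))"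
    by (simp add: strms_val_map sum_list_const_mult sum_list_mult_const o_def mult_ac flip: sum_list_of_real)
  show ?thesis
    unfolding strm_dx.simps strms_val_append strms_val_map2_extra_atm leibniz
    by (simp add: ring_distribs mult_ac)
qed

lemma has_vector_derivative_strm_val:
  assumes "((\<lambda>s. q2 g (P s) (\<Xi> s)) has_real_derivative q') (at 0)" "q2 g (P 0) (\<Xi> 0) > 0"
    and "((\<lambda>s. atms_val g as (P s)) has_real_derivative A') (at 0)"
    and "((\<lambda>s. xi_mono e (\<Xi> s)) has_real_derivative X') (at 0)"
  shows "((\<lambda>s. strm_val g (k, (c, as, e)) (P s) (\<Xi> s)) has_vector_derivative
     c * complex_of_real ((- of_int k / 2) * xi_norm g (P 0) (\<Xi> 0) powi (- k - 2) * q'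
           * atms_val g as (P 0) * xi_mono e (\<Xi> 0)
         + xi_norm g (P 0) (\<Xi> 0) powi (- k) * (A' * xi_mono e (\<Xi> 0) + atms_val g as (P 0) * X'))) (at 0)"
  using has_vector_derivative_strm_form[OF assms] by (simp add: xi_norm_def)

context ordered_tangential_metric
begin

lemma has_real_derivative_q2_x:
  assumes p: "p \<in> U"
  shows "((\<lambda>s. q2 g (p + s *\<^sub>R dvec d) \<xi>) has_real_derivative
          (\<Sum>\<alpha>\<in>UNIV. \<Sum>\<beta>\<in>UNIV. dd d (ginv g \<alpha> \<beta>) p * \<xi>$\<alpha> * \<xi>$\<beta>)) (at 0)"
  unfolding q2_def
  by (intro DERIV_sum DERIV_cmult_right has_real_derivative_dd_0 differentiable_ginv[OF p])

lemma has_real_derivative_atms_val: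
  assumes p: "p \<in> U"
  shows "((\<lambda>s. atms_val g as (p + s *\<^sub>R dvec d)) has_real_derivative
          (\<Sum>bs\<leftarrow>single_updates (atm_deriv d) as. atms_val g bs p)) (at 0)"
proof (induction as)
  case (Cons a as)
  have "((\<lambda>s. atm_val g a (p + s *\<^sub>R dvec d)) has_real_derivative atm_val g (atm_deriv d a) p) (at 0)"
    using has_real_derivative_dd_0[OF differentiable_atm_val[OF p]] unfolding dd_atm_val[OF p] .
  from DERIV_mult[OF this Cons.IH] show ?case
    by (simp add: atms_val_def o_def sum_list_const_mult mult.commute)
qed (simp add: atms_val_def)

lemma atm_val_deriv_ginv_atm: "p \<in> U \<Longrightarrow> atm_val g (atm_deriv d (ginv_atm \<alpha> \<beta>)) p = dd d (ginv g \<alpha> \<beta>) p"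
  using dd_atm_val[of p d "ginv_atm \<alpha> \<beta>"] by (simp add: atm_val_ginv_atm)

lemma has_vector_derivative_strms_val_x:
  assumes p: "p \<in> U" and \<xi>: "\<xi> \<noteq> 0"
  shows "((\<lambda>s. strms_val g R (p + s *\<^sub>R dvec d) \<xi>) has_vector_derivative strms_val g (strms_dx d R) p \<xi>) (at 0)"
proof (induction R)
  case (Cons t R)
  obtain k c as e where t: "t = (k, (c, as, e))" by (cases t) auto
  have "((\<lambda>s. strm_val g t (p + s *\<^sub>R dvec d) \<xi>) has_vector_derivative strms_val g (strm_dx d t) p \<xi>) (at 0)"
    unfolding t
    by (rule has_vector_derivative_eq_rhs[OF has_vector_derivative_strm_val[where P = "\<lambda>s. p + s *\<^sub>R dvec d"
          and \<Xi> = "\<lambda>s. \<xi>", OF has_real_derivative_q2_x[OF p] _ has_real_derivative_atms_val[OF p] DERIV_const]])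
      (simp_all only: strms_val_strm_dx atm_val_deriv_ginv_atm[OF p] scaleR_zero_left add_0_right
        mult_zero_right q2_pos[OF p \<xi>])
  from has_vector_derivative_add[OF this Cons.IH] show ?case by (simp add: strms_dx_def)
qed (simp add: strms_dx_def)

lemma dd_strms_val:
  assumes p: "p \<in> U" and \<xi>: "\<xi> \<noteq> 0" and f: "\<And>q. q \<in> U \<Longrightarrow> f q \<xi> = strms_val g R q \<xi>"
  shows "dd d (\<lambda>q. f q \<xi>) p = strms_val g (strms_dx d R) p \<xi>"
proof -
  have "dd d (\<lambda>q. f q \<xi>) p = dd d (\<lambda>q. strms_val g R q \<xi>) p"
    by (rule dd_cong_open[OF open_U p]) (rule f)
  also have "\<dots> = strms_val g (strms_dx d R) p \<xi>"
    unfolding dd_def by (rule vector_derivative_at[OF has_vector_derivative_strms_val_x[OF p \<xi>]])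
  finally show ?thesis .
qed

lemma has_vector_derivative_strms_val_xi:
  assumes p: "p \<in> U" and \<xi>: "\<xi> \<noteq> 0"
  shows "((\<lambda>s. strms_val g R p (\<xi> + s *\<^sub>R axis \<gamma> 1)) has_vector_derivative strms_val g (strms_dxi \<gamma> R) p \<xi>) (at 0)"
proof (induction R)
  case (Cons t R)
  obtain k c as e where t: "t = (k, (c, as, e))" by (cases t) auto
  have "((\<lambda>s. strm_val g t p (\<xi> + s *\<^sub>R axis \<gamma> 1)) has_vector_derivative strms_val g (strm_dxi \<gamma> t) p \<xi>) (at 0)"
    unfolding t
    by (rule has_vector_derivative_eq_rhs[OF has_vector_derivative_strm_val[where P = "\<lambda>s. p"
          and \<Xi> = "\<lambda>s. \<xi> + s *\<^sub>R axis \<gamma> 1", OF has_real_derivative_q2_xi _ DERIV_const has_real_derivative_xi_mono]])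
      (simp_all only: strms_val_strm_dxi scaleR_zero_left add_0_right add_0_left mult_zero_left
        q2_pos[OF p \<xi>])
  from has_vector_derivative_add[OF this Cons.IH] show ?case by (simp add: strms_dxi_def)
qed (simp add: strms_dxi_def)

lemma pdxi_strms_val:
  assumes p: "p \<in> U" and \<xi>: "\<xi> \<noteq> 0" and f: "\<And>\<xi>'. \<xi>' \<noteq> 0 \<Longrightarrow> f p \<xi>' = strms_val g R p \<xi>'"
  shows "pdxi \<gamma> f p \<xi> = strms_val g (strms_dxi \<gamma> R) p \<xi>"
proof -
  have "\<forall>\<^sub>F s in nhds 0. \<xi> + s *\<^sub>R axis \<gamma> 1 \<in> - {0}"
    by (rule eventually_line_in_open) (use \<xi> in auto)
  then have "pdxi \<gamma> f p \<xi> = vector_derivative (\<lambda>s. strms_val g R p (\<xi> + s *\<^sub>R axis \<gamma> 1)) (at 0)"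
    unfolding pdxi_def by (intro vector_derivative_cong_eq) (auto elim!: eventually_mono simp: f)
  also have "\<dots> = strms_val g (strms_dxi \<gamma> R) p \<xi>"
    by (rule vector_derivative_at[OF has_vector_derivative_strms_val_xi[OF p \<xi>]])
  finally show ?thesis .
qed

end

section \<open>Representation of the recursion\<close>

definition rep_sq :: "('n::{finite,linorder}) strm list" where
  "rep_sq = [(-1, (1, [], \<lambda>_. 0))]"

definition rep_E :: "('n::{finite,linorder}) strm list" where
  "rep_E = concat (map (\<lambda>\<alpha>. map (\<lambda>\<beta>.
     (0, (complex_of_real (- 1 / 2), [ginv_atm \<alpha> \<beta>, (False, \<alpha>, \<beta>, \<lambda>_. 0, 1)], \<lambda>_. 0))) univ_list) univ_list)"

definition rep_q1 :: "('n::{finite,linorder}) strm list" where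
  "rep_q1 = concat (map (\<lambda>\<alpha>. concat (map (\<lambda>\<beta>. concat (map (\<lambda>i. map (\<lambda>k.
          (0, (- \<i> * complex_of_real (1/2), [ginv_atm \<alpha> \<beta>, ginv_atm k i, (False, i, k, mi_unit \<alpha>, 0)], mi_unit \<beta>)))
        univ_list) univ_list)) univ_list)) univ_list)
      @ concat (map (\<lambda>\<alpha>. map (\<lambda>\<beta>. (0, (- \<i>, [(True, \<alpha>, \<beta>, mi_unit \<alpha>, 0)], mi_unit \<beta>))) univ_list) univ_list)"

definition strms_Dx :: "'n::{finite,linorder} \<Rightarrow> 'n strm list \<Rightarrow> 'n strm list" where
  "strms_Dx \<alpha> R = strms_scale (- \<i>) (strms_dx (Some \<alpha>) R)"

definition rep_r1 :: "('n::{finite,linorder}) strm list" where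
  "rep_r1 = strms_scale (-1) rep_sq"

definition rep_r0 :: "('n::{finite,linorder}) strm list" where
  "rep_r0 = strms_shift 1 (strms_scale (1/2)
     (concat (map (\<lambda>\<alpha>. strms_mult (strms_dxi \<alpha> rep_sq) (strms_Dx \<alpha> rep_sq)) univ_list)
      @ strms_scale (-1) rep_q1 @ strms_scale (-1) (strms_dx None rep_sq) @ strms_mult rep_E rep_sq))"

lemma strms_graded_rep_sq: "strms_graded 0 0 rep_sq"
  by (simp add: strms_graded_def rep_sq_def)

lemma strms_graded_rep_E: "strms_graded 1 0 rep_E"
  by (auto simp: strms_graded_def rep_E_def)

lemma strms_graded_rep_q1: "strms_graded 1 0 rep_q1"
  by (auto simp: strms_graded_def rep_q1_def)

lemma strms_graded_Dx:
  assumes "strms_graded w \<pi> R"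
  shows "strms_graded (Suc w) (Suc \<pi>) (strms_Dx \<alpha> R)"
  unfolding strms_Dx_def by (rule strms_graded_scale) (use strms_graded_dx[OF assms, of "Some \<alpha>"] in simp)

lemma strms_graded_rep_r1: "strms_graded 0 0 rep_r1"
  unfolding rep_r1_def by (rule strms_graded_scale[OF strms_graded_rep_sq])

lemma strms_graded_rep_r0: "strms_graded 1 0 (rep_r0 :: ('n::{finite,linorder}) strm list)"
proof -
  have "strms_graded (0 + Suc 0) (Suc 0 + Suc 0) (strms_mult (strms_dxi \<alpha> rep_sq) (strms_Dx \<alpha> rep_sq))"
    for \<alpha> :: 'n
    by (intro strms_graded_mult strms_graded_dxi strms_graded_Dx strms_graded_rep_sq)
  then have "strms_graded 1 0 (strms_mult (strms_dxi \<alpha> rep_sq) (strms_Dx \<alpha> rep_sq))" for \<alpha> :: 'n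
    using strms_graded_parity_cong by fastforce
  moreover have "strms_graded 1 0 (strms_dx None rep_sq :: 'n strm list)"
    using strms_graded_dx[OF strms_graded_rep_sq, of None] by simp
  moreover have "strms_graded 1 0 (strms_mult rep_E rep_sq :: 'n strm list)"
    using strms_graded_mult[OF strms_graded_rep_E strms_graded_rep_sq] by simp
  ultimately show ?thesis unfolding rep_r0_def
    by (intro strms_graded_shift strms_graded_scale strms_graded_concat_map
        strms_graded_rep_q1 strms_graded_append) auto
qed

context ordered_tangential_metric
begin

lemma strms_val_rep_sq: "strms_val g rep_sq p \<xi> = sq g p \<xi>"
  by (simp add: rep_sq_def atms_val_def xi_mono_def sq_def xi_norm_def)

lemma strms_val_rep_E: "strms_val g rep_E p \<xi> = complex_of_real (Efun g p)"
  by (simp add: rep_E_def strms_val_concat_map strms_val_map sum_list_univ_list atms_val_def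
      xi_mono_def atm_val_ginv_atm Efun_def sum_distrib_left of_real_sum)

lemma strms_val_rep_q1:
  assumes p: "p \<in> U"
  shows "strms_val g rep_q1 p \<xi> = q1 g p \<xi>"
proof -
  have "q1 g p \<xi> = - \<i> * complex_of_real (\<Sum>\<alpha>\<in>UNIV. \<Sum>\<beta>\<in>UNIV.
      (1/2 * ginv g \<alpha> \<beta> p * (\<Sum>i\<in>UNIV. \<Sum>k\<in>UNIV. ginv g k i p * dd (Some \<alpha>) (g i k) p)
        + dd (Some \<alpha>) (ginv g \<alpha> \<beta>) p) * \<xi> $ \<beta>)"
    unfolding q1_def dd_ln_gdet[OF p] by simp
  also have "\<dots> = - \<i> * complex_of_real (\<Sum>\<alpha>\<in>UNIV. \<Sum>\<beta>\<in>UNIV.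
      (\<Sum>i\<in>UNIV. \<Sum>k\<in>UNIV. 1/2 * ginv g \<alpha> \<beta> p * (ginv g k i p * dd (Some \<alpha>) (g i k) p) * \<xi> $ \<beta>))
     + - \<i> * complex_of_real (\<Sum>\<alpha>\<in>UNIV. \<Sum>\<beta>\<in>UNIV. dd (Some \<alpha>) (ginv g \<alpha> \<beta>) p * \<xi> $ \<beta>)"
    by (simp add: sum_distrib_left sum_distrib_right sum.distrib algebra_simps)
  also have "\<dots> = strms_val g rep_q1 p \<xi>"
    unfolding rep_q1_def strms_val_append strms_val_concat_map strms_val_map sum_list_univ_list
    by (simp add: atms_val_def xi_mono_unit atm_val_ginv_atm sum_distrib_left mult_ac)
  finally show ?thesis ..
qed

lemma xi_norm_pos: "p \<in> U \<Longrightarrow> \<xi> \<noteq> 0 \<Longrightarrow> xi_norm g p \<xi> > 0"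
  using q2_pos by (simp add: xi_norm_def)

lemma strms_val_rep_r1: "strms_val g rep_r1 p \<xi> = r1 g p \<xi>"
  by (simp add: rep_r1_def strms_val_scale strms_val_rep_sq r1_def)

lemma strms_val_rep_r0:
  assumes p: "p \<in> U" and \<xi>: "\<xi> \<noteq> 0"
  shows "strms_val g rep_r0 p \<xi> = r0 g p \<xi>"
proof -
  have N: "xi_norm g p \<xi> \<noteq> 0" using xi_norm_pos[OF p \<xi>] by simp
  have sq: "q \<in> U \<Longrightarrow> sq g q \<xi> = strms_val g rep_sq q \<xi>" for q by (simp add: strms_val_rep_sq)
  have "pdxi \<alpha> (sq g) p \<xi> = strms_val g (strms_dxi \<alpha> rep_sq) p \<xi>" for \<alpha>
    by (rule pdxi_strms_val[OF p \<xi>]) (simp add: strms_val_rep_sq)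
  moreover have "Dx \<alpha> (sq g) p \<xi> = strms_val g (strms_Dx \<alpha> rep_sq) p \<xi>" for \<alpha>
    using dd_strms_val[where f = "sq g" and R = rep_sq, OF p \<xi> sq]
    by (simp add: Dx_def pdx_def strms_Dx_def strms_val_scale)
  moreover have "pdn (sq g) p \<xi> = strms_val g (strms_dx None rep_sq) p \<xi>"
    using dd_strms_val[where f = "sq g" and R = rep_sq, OF p \<xi> sq] by (simp add: pdn_def)
  ultimately have "strms_val g rep_r0 p \<xi> = complex_of_real (xi_norm g p \<xi> powi (- 1)) * (1/2 *
      ((\<Sum>\<alpha>\<leftarrow>univ_list. pdxi \<alpha> (sq g) p \<xi> * Dx \<alpha> (sq g) p \<xi>) - q1 g p \<xi> - pdn (sq g) p \<xi>
        + complex_of_real (Efun g p) * sq g p \<xi>))"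
    unfolding rep_r0_def strms_val_shift[OF N] strms_val_scale strms_val_append strms_val_concat_map
      strms_val_mult[OF N]
    by (simp add: strms_val_rep_q1[OF p] strms_val_rep_E strms_val_rep_sq strms_val_scale)
  also have "\<dots> = r0 g p \<xi>"
    using N unfolding r0_def sum_list_univ_list
    by (simp add: sq_def xi_norm_def power_int_minus1_right divide_simps)
  finally show ?thesis .
qed

end

definition strms_pdxi_K :: "('n::{finite,linorder} \<Rightarrow> nat) \<Rightarrow> 'n strm list \<Rightarrow> 'n strm list" where
  "strms_pdxi_K K R = fold strms_dxi (mi_list K) R"

definition strms_Dx_K :: "('n::{finite,linorder} \<Rightarrow> nat) \<Rightarrow> 'n strm list \<Rightarrow> 'n strm list" where
  "strms_Dx_K K R = fold strms_Dx (mi_list K) R"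

lemma strms_graded_pdxi_K:
  assumes "strms_graded w \<pi> R"
  shows "strms_graded w (\<pi> + mi_abs K) (strms_pdxi_K K R)"
proof -
  have "\<And>\<pi> R. strms_graded w \<pi> R \<Longrightarrow> strms_graded w (\<pi> + length xs) (fold strms_dxi xs R)" for xs
  proof (induction xs)
    case (Cons \<alpha> xs)
    from Cons.IH[OF strms_graded_dxi[OF Cons.prems]] show ?case by simp
  qed simp
  from this[OF assms, of "mi_list K"] show ?thesis by (simp add: strms_pdxi_K_def length_mi_list)
qed

lemma strms_graded_Dx_K:
  assumes "strms_graded w \<pi> R"
  shows "strms_graded (w + mi_abs K) (\<pi> + mi_abs K) (strms_Dx_K K R)"
proof -
  have "\<And>w \<pi> R. strms_graded w \<pi> R \<Longrightarrow> strms_graded (w + length xs) (\<pi> + length xs) (fold strms_Dx xs R)" for xs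
  proof (induction xs)
    case (Cons \<alpha> xs)
    from Cons.IH[OF strms_graded_Dx[OF Cons.prems]] show ?case by simp
  qed simp
  from this[OF assms, of "mi_list K"] show ?thesis by (simp add: strms_Dx_K_def length_mi_list)
qed

definition multi_indices :: "int \<Rightarrow> ('n::finite \<Rightarrow> nat) set" where
  "multi_indices n = {K. int (mi_abs K) = n}"

lemma finite_multi_indices: "finite (multi_indices n :: ('n::finite \<Rightarrow> nat) set)"
proof (rule finite_subset)
  show "multi_indices n \<subseteq> {K :: 'n \<Rightarrow> nat. \<forall>x. (x \<in> UNIV \<longrightarrow> K x \<in> {..nat n}) \<and> (x \<notin> UNIV \<longrightarrow> K x = 0)}"
  proof
    fix K assume "K \<in> multi_indices n"
    then have "nat n = mi_abs K" by (simp add: multi_indices_def)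
    moreover have "K x \<le> mi_abs K" for x
      unfolding mi_abs_def by (rule member_le_sum) auto
    ultimately show "K \<in> {K. \<forall>x. (x \<in> UNIV \<longrightarrow> K x \<in> {..nat n}) \<and> (x \<notin> UNIV \<longrightarrow> K x = 0)}"
      by simp
  qed
  show "finite {K :: 'n \<Rightarrow> nat. \<forall>x. (x \<in> UNIV \<longrightarrow> K x \<in> {..nat n}) \<and> (x \<notin> UNIV \<longrightarrow> K x = 0)}"
    by (rule finite_set_of_finite_funs) simp_all
qed

definition multi_index_list :: "int \<Rightarrow> ('n::finite \<Rightarrow> nat) list" where
  "multi_index_list n = (SOME xs. distinct xs \<and> set xs = multi_indices n)"

lemma multi_index_list:
  "distinct (multi_index_list n :: ('n::finite \<Rightarrow> nat) list) \<and> set (multi_index_list n :: ('n \<Rightarrow> nat) list) = multi_indices n"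
proof -
  obtain xs :: "('n \<Rightarrow> nat) list" where "set xs = multi_indices n \<and> distinct xs"
    using finite_distinct_list[OF finite_multi_indices] by blast
  then have "\<exists>xs :: ('n \<Rightarrow> nat) list. distinct xs \<and> set xs = multi_indices n" by blast
  then show ?thesis unfolding multi_index_list_def by (rule someI_ex)
qed

definition rep_composition_sum :: "nat \<Rightarrow> ('n::{finite,linorder}) strm list list \<Rightarrow> 'n strm list" where
  "rep_composition_sum m L =
     concat (map (\<lambda>j. concat (map (\<lambda>k. concat (map (\<lambda>K.
         strms_scale (1 / of_nat (mi_fact K)) (strms_mult (strms_pdxi_K K (L ! nat (1 - j))) (strms_Dx_K K (L ! nat (1 - k)))))
       (multi_index_list (j + k + int m)))) [- int m..1])) [- int m..1])"

text \<open>\<open>rep_step m L\<close> represents \<open>rstep\<close> when \<open>L ! i\<close> represents \<open>r\<^sub>1\<^sub>-\<^sub>i\<close>.\<close>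

definition rep_step :: "nat \<Rightarrow> ('n::{finite,linorder}) strm list list \<Rightarrow> 'n strm list" where
  "rep_step m L = strms_shift 1 (strms_scale (1/2)
     (rep_composition_sum m L @ strms_dx None (L ! (m + 1)) @ strms_scale (-1) (strms_mult rep_E (L ! (m + 1)))))"

fun rep_list :: "nat \<Rightarrow> ('n::{finite,linorder}) strm list list" where
  "rep_list 0 = [rep_r1]"
| "rep_list (Suc 0) = [rep_r1, rep_r0]"
| "rep_list (Suc (Suc m)) = rep_list (Suc m) @ [rep_step m (rep_list (Suc m))]"

lemma length_rep_list [simp]: "length (rep_list n) = Suc n"
  by (induction n rule: rep_list.induct) simp_all

lemma length_rlist [simp]: "length (rlist g n) = Suc n"
  by (induction g n rule: rlist.induct) simp_all

text \<open>In each summand the \<open>|K|\<close> \<open>\<xi>\<close>-derivatives and the \<open>|K|\<close> tangential \<open>x\<close>-derivatives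
  contribute \<open>2|K|\<close> to the parity defect, and the weights add up to
  \<open>(1 - j) + (1 - k) + |K| = m + 2\<close>.\<close>

lemma strms_graded_rep_step:
  assumes L: "\<And>i. i \<le> Suc m \<Longrightarrow> strms_graded i 0 (L ! i)"
  shows "strms_graded (Suc (Suc m)) 0 (rep_step m L)"
proof -
  have summand: "strms_graded (Suc (Suc m)) 0
      (strms_mult (strms_pdxi_K K (L ! nat (1 - j))) (strms_Dx_K K (L ! nat (1 - k))))"
    if "j \<in> set [- int m..1]" "k \<in> set [- int m..1]" "K \<in> set (multi_index_list (j + k + int m))" for j k K
  proof -
    have j: "- int m \<le> j" "j \<le> 1" and k: "- int m \<le> k" "k \<le> 1" using that(1,2) by auto
    have "int (mi_abs K) = j + k + int m"
      using that(3) multi_index_list by (auto simp: multi_indices_def)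
    then have w: "nat (1 - j) + (nat (1 - k) + mi_abs K) = Suc (Suc m)" using j k by linarith
    have "strms_graded (nat (1 - j) + (nat (1 - k) + mi_abs K)) (0 + mi_abs K + (0 + mi_abs K))
        (strms_mult (strms_pdxi_K K (L ! nat (1 - j))) (strms_Dx_K K (L ! nat (1 - k))))"
      using j k by (intro strms_graded_mult strms_graded_pdxi_K strms_graded_Dx_K L) auto
    then have "strms_graded (Suc (Suc m)) (mi_abs K + mi_abs K)
        (strms_mult (strms_pdxi_K K (L ! nat (1 - j))) (strms_Dx_K K (L ! nat (1 - k))))"
      unfolding w by simp
    then show ?thesis by (rule strms_graded_parity_cong) simp
  qed
  have normal: "strms_graded (Suc (Suc m)) 0 (strms_dx None (L ! (m + 1)))"
    using strms_graded_dx[OF L[of "Suc m"], of None] by simp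
  have E: "strms_graded (Suc (Suc m)) 0 (strms_mult rep_E (L ! (m + 1)))"
    using strms_graded_mult[OF strms_graded_rep_E L[of "Suc m"]] by simp
  show ?thesis
    unfolding rep_step_def rep_composition_sum_def
    by (intro strms_graded_shift strms_graded_scale strms_graded_append strms_graded_concat_map
        summand normal E)
qed

lemma strms_graded_rep_list: "i \<le> n \<Longrightarrow> strms_graded i 0 (rep_list n ! i)"
proof (induction n arbitrary: i rule: rep_list.induct)
  case 1
  then show ?case by (simp add: strms_graded_rep_r1)
next
  case 2
  then have "i = 0 \<or> i = 1" by arith
  then show ?case using strms_graded_rep_r1 strms_graded_rep_r0 by auto
next
  case (3 m)
  show ?case
  proof (cases "i \<le> Suc m")
    case True
    then show ?thesis using "3.IH"(1) by (simp add: nth_append)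
  next
    case False
    then have "i = Suc (Suc m)" using "3.prems" by simp
    then show ?thesis using strms_graded_rep_step[of m "rep_list (Suc m)", OF "3.IH"(1)] by (simp add: nth_append)
  qed
qed

context ordered_tangential_metric
begin

lemma strms_val_pdxi_K:
  assumes "\<And>\<xi>'. \<xi>' \<noteq> 0 \<Longrightarrow> f p \<xi>' = strms_val g R p \<xi>'" "p \<in> U" "\<xi> \<noteq> 0"
  shows "pdxi_K K f p \<xi> = strms_val g (strms_pdxi_K K R) p \<xi>"
proof -
  have "\<forall>\<xi>. \<xi> \<noteq> 0 \<longrightarrow> fold pdxi xs f p \<xi> = strms_val g (fold strms_dxi xs R) p \<xi>"
    if "\<And>\<xi>'. \<xi>' \<noteq> 0 \<Longrightarrow> f p \<xi>' = strms_val g R p \<xi>'" for xs f R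
    using that
  proof (induction xs arbitrary: f R)
    case (Cons \<alpha> xs)
    have "pdxi \<alpha> f p \<xi>' = strms_val g (strms_dxi \<alpha> R) p \<xi>'" if "\<xi>' \<noteq> 0" for \<xi>'
      by (rule pdxi_strms_val[OF assms(2) that]) (rule Cons.prems)
    then show ?case using Cons.IH[of "pdxi \<alpha> f" "strms_dxi \<alpha> R"] by simp
  qed simp
  from this[where xs = "mi_list K" and f = f and R = R, OF assms(1)] assms(3) show ?thesis by (simp add: pdxi_K_def strms_pdxi_K_def)
qed

lemma strms_val_Dx_K:
  assumes "\<And>q \<xi>'. q \<in> U \<Longrightarrow> \<xi>' \<noteq> 0 \<Longrightarrow> f q \<xi>' = strms_val g R q \<xi>'" "p \<in> U" "\<xi> \<noteq> 0"
  shows "Dx_K K f p \<xi> = strms_val g (strms_Dx_K K R) p \<xi>"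
proof -
  have "\<forall>q\<in>U. \<forall>\<xi>. \<xi> \<noteq> 0 \<longrightarrow> fold Dx xs f q \<xi> = strms_val g (fold strms_Dx xs R) q \<xi>"
    if "\<And>q \<xi>'. q \<in> U \<Longrightarrow> \<xi>' \<noteq> 0 \<Longrightarrow> f q \<xi>' = strms_val g R q \<xi>'" for xs f R
    using that
  proof (induction xs arbitrary: f R)
    case (Cons \<alpha> xs)
    have "Dx \<alpha> f q \<xi>' = strms_val g (strms_Dx \<alpha> R) q \<xi>'" if "q \<in> U" "\<xi>' \<noteq> 0" for q \<xi>'
      using dd_strms_val[where f = f and R = R, OF that Cons.prems[OF _ that(2)]]
      by (simp add: Dx_def pdx_def strms_Dx_def strms_val_scale)
    then show ?case using Cons.IH[of "Dx \<alpha> f" "strms_Dx \<alpha> R"] by simp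
  qed simp
  from this[where xs = "mi_list K" and f = f and R = R, OF assms(1)] assms(2,3) show ?thesis by (simp add: Dx_K_def strms_Dx_K_def)
qed

end

definition trms_of_strms :: "('n::{finite,linorder}) strm list \<Rightarrow> 'n trm list" where
  "trms_of_strms R = map (\<lambda>(k, M). (k, [M])) R"

lemma rep_val_trms_of_strms: "rep_val g (trms_of_strms R) p \<xi> = strms_val g R p \<xi>"
proof (induction R)
  case (Cons t R)
  obtain k c as e where t: "t = (k, (c, as, e))" by (cases t) auto
  with Cons show ?case
    by (simp add: trms_of_strms_def rep_val_def xi_norm_def atms_val_def xi_mono_def mult_ac)
qed (simp add: trms_of_strms_def rep_val_def)

lemma graded_trm_trms_of_strms:
  assumes "strms_graded w 0 R" "t \<in> set (trms_of_strms R)"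
  shows "graded_trm (int w) t"
proof -
  obtain k M where "(k, M) \<in> set R" "t = (k, [M])"
    using assms(2) by (auto simp: trms_of_strms_def)
  moreover from this(1) have "mnm_w M = w" "even (mnm_w M + mnm_nw M + mnm_deg M)"
    using assms(1) by (auto simp: strms_graded_def simp del: even_add)
  moreover from this(2) have "even (mnm_w M mod 2 + mnm_nw M mod 2 + mnm_deg M mod 2)"
    by presburger
  ultimately show ?thesis by auto
qed

context ordered_tangential_metric
begin

lemma strms_val_rep_composition_sum:
  assumes L: "\<And>i q \<xi>'. i \<le> Suc m \<Longrightarrow> q \<in> U \<Longrightarrow> \<xi>' \<noteq> 0 \<Longrightarrow> (L ! i) q \<xi>' = strms_val g (RL ! i) q \<xi>'"
    and p: "p \<in> U" and \<xi>: "\<xi> \<noteq> 0"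
  shows "strms_val g (rep_composition_sum m RL) p \<xi>
     = (\<Sum>j\<in>{- int m..1}. \<Sum>k\<in>{- int m..1}. \<Sum>K\<in>{K :: 'n \<Rightarrow> nat. int (mi_abs K) = j + k + int m}.
         (1 / of_nat (mi_fact K)) * pdxi_K K (L ! nat (1 - j)) p \<xi> * Dx_K K (L ! nat (1 - k)) p \<xi>)"
proof -
  have N: "xi_norm g p \<xi> \<noteq> 0" using xi_norm_pos[OF p \<xi>] by simp
  have summand: "(1 / of_nat (mi_fact K)) * pdxi_K K (L ! nat (1 - j)) p \<xi> * Dx_K K (L ! nat (1 - k)) p \<xi>
     = strms_val g (strms_scale (1 / of_nat (mi_fact K))
         (strms_mult (strms_pdxi_K K (RL ! nat (1 - j))) (strms_Dx_K K (RL ! nat (1 - k))))) p \<xi>"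
    if "j \<in> {- int m..1}" "k \<in> {- int m..1}" for j k K
  proof -
    have i: "nat (1 - j) \<le> Suc m" "nat (1 - k) \<le> Suc m" using that by auto
    have "pdxi_K K (L ! nat (1 - j)) p \<xi> = strms_val g (strms_pdxi_K K (RL ! nat (1 - j))) p \<xi>"
      by (rule strms_val_pdxi_K[where f = "L ! nat (1 - j)" and R = "RL ! nat (1 - j)", OF L[OF i(1) p] p \<xi>])
    moreover have "Dx_K K (L ! nat (1 - k)) p \<xi> = strms_val g (strms_Dx_K K (RL ! nat (1 - k))) p \<xi>"
      by (rule strms_val_Dx_K[where f = "L ! nat (1 - k)" and R = "RL ! nat (1 - k)", OF L[OF i(2)] p \<xi>])
    ultimately show ?thesis by (simp add: strms_val_scale strms_val_mult[OF N] mult.assoc)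
  qed
  have dist: "distinct (multi_index_list n :: ('n \<Rightarrow> nat) list)"
    and indices: "set (multi_index_list n :: ('n \<Rightarrow> nat) list) = {K. int (mi_abs K) = n}" for n
    using multi_index_list by (auto simp: multi_indices_def)
  show ?thesis
    unfolding rep_composition_sum_def strms_val_concat_map sum_list_distinct_conv_sum_set[OF distinct_upto]
      set_upto sum_list_distinct_conv_sum_set[OF dist] indices
    by (intro sum.cong refl) (simp only: summand)
qed

lemma strms_val_rep_step:
  assumes L: "\<And>i q \<xi>'. i \<le> Suc m \<Longrightarrow> q \<in> U \<Longrightarrow> \<xi>' \<noteq> 0 \<Longrightarrow> (L ! i) q \<xi>' = strms_val g (RL ! i) q \<xi>'"
    and p: "p \<in> U" and \<xi>: "\<xi> \<noteq> 0"
  shows "rstep g m L p \<xi> = strms_val g (rep_step m RL) p \<xi>"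
proof -
  have N: "xi_norm g p \<xi> \<noteq> 0" using xi_norm_pos[OF p \<xi>] by simp
  have last: "(L ! (m + 1)) q \<xi> = strms_val g (RL ! (m + 1)) q \<xi>" if "q \<in> U" for q
    using L[OF _ that \<xi>] by simp
  have "pdn (L ! (m + 1)) p \<xi> = strms_val g (strms_dx None (RL ! (m + 1))) p \<xi>"
    unfolding pdn_def by (rule dd_strms_val[where f = "L ! (m + 1)" and R = "RL ! (m + 1)", OF p \<xi> last])
  moreover note strms_val_rep_composition_sum[OF L p \<xi>]
  ultimately show ?thesis
    unfolding rstep_def rep_step_def strms_val_shift[OF N] strms_val_scale strms_val_append
      strms_val_mult[OF N] last[OF p] strms_val_rep_E
    using N by (simp add: sq_def xi_norm_def power_int_minus1_right field_simps)
qed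

lemma strms_val_rep_list:
  "i \<le> n \<Longrightarrow> p \<in> U \<Longrightarrow> \<xi> \<noteq> 0 \<Longrightarrow> (rlist g n ! i) p \<xi> = strms_val g (rep_list n ! i) p \<xi>"
proof (induction n arbitrary: i p \<xi> rule: rep_list.induct)
  case 1
  then show ?case by (simp add: strms_val_rep_r1)
next
  case 2
  then have "i = 0 \<or> i = 1" by arith
  then show ?case using strms_val_rep_r1[of p \<xi>] strms_val_rep_r0[OF "2.prems"(2,3)] by auto
next
  case (3 m)
  show ?case
  proof (cases "i \<le> Suc m")
    case True
    then show ?thesis using "3.IH"(1) "3.prems" by (simp add: nth_append)
  next
    case False
    then have "i = Suc (Suc m)" using "3.prems" by simp
    then show ?thesis
      using strms_val_rep_step[OF "3.IH"(1) "3.prems"(2,3)] by (simp add: nth_append)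
  qed
qed

end

theorem lemma3p1:
  fixes m :: int
  assumes "m \<ge> -1"
  shows "(\<exists>R :: ('n::{finite,linorder}) trm list. (\<forall>t\<in>set R. graded_trm (m + 1) t) \<and>
            (\<forall>U g. tang_metric U g \<longrightarrow>
               (\<forall>p\<in>U. \<forall>\<xi>. \<xi> \<noteq> 0 \<longrightarrow> rhat g (- m) p \<xi> = rep_val g R p \<xi>)))
       \<and> (\<exists>R :: 'n trm list. (\<forall>t\<in>set R. graded_trm (m + 1) t) \<and>
            (\<forall>U g. tang_metric U g \<longrightarrow>
               (\<forall>x \<xi>. (x, 0) \<in> U \<longrightarrow> \<xi> \<noteq> 0 \<longrightarrow>
                  - rhat g (- m) (x, 0) \<xi> = rep_val g R (x, 0) \<xi>)))"
proof -
  define n where "n = nat (m + 1)"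
  define R :: "'n strm list" where "R = rep_list n ! n"
  have weight: "m + 1 = int n" using assms by (simp add: n_def)
  have "strms_graded n 0 R" and "strms_graded n 0 (strms_scale (-1) R)"
    using strms_graded_rep_list[of n n] strms_graded_scale by (simp_all add: R_def)
  then have "\<forall>t\<in>set (trms_of_strms R). graded_trm (m + 1) t"
    and "\<forall>t\<in>set (trms_of_strms (strms_scale (-1) R)). graded_trm (m + 1) t"
    using graded_trm_trms_of_strms weight by auto
  moreover have "rhat g (- m) p \<xi> = strms_val g R p \<xi>" if "tang_metric U g" "p \<in> U" "\<xi> \<noteq> 0" for U g p \<xi>
  proof -
    interpret ordered_tangential_metric U g by unfold_locales (rule that(1))
    show ?thesis
      using strms_val_rep_list[of n n p \<xi>] that(2,3) by (simp add: rhat_def n_def R_def add.commute)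
  qed
  ultimately show ?thesis
    by (intro conjI exI[of _ "trms_of_strms R"] exI[of _ "trms_of_strms (strms_scale (-1) R)"])
      (simp_all add: rep_val_trms_of_strms strms_val_scale)
qed

end
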